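(* Let $G$ be a countable directed graph and let $x,y\in\mathcal{V}(G)$ with $x\neq y$. Assume there are exactly $n$ distinct edges with source $x$ and range $y$, where $1\le n\le\infty$. Then the closed ideal $\operatorname{rad}(\mathcal{T}_+(G)/\mathcal{K}_{x,y})$ of the Banach algebra $\mathcal{T}_+(G)/\mathcal{K}_{x,y}$ is $n$-generated; indeed, if $e_1,e_2,\dots$ are these edges then the cosets $L_{e_i}+\mathcal{K}_{x,y}$ form a generating set, and no generating set has fewer than $n$ elements (for $n=\infty$: there is no finite generating set).
   Context: A countable directed graph $G$ has countable vertex set $\mathcal{V}(G)$, edge set $\mathcal{E}(G)$, range and source maps $r,s$. The free semigroupoid $\mathbb{F}^+(G)$ consists of vertices and finite paths $w=e_k\cdots e_1$ with $s(e_i)=r(e_{i-1})$, $s(w)=s(e_1)$, $r(w)=r(e_k)$. On $\ell^2(\mathbb{F}^+(G))$ with orthonormal basis $\{\xi_w\}$, $L_e\xi_w=\xi_{ew}$ if $s(e)=r(w)$ and $0$ otherwise, and $P_v$ is the projection onto $\overline{\operatorname{span}}\{\xi_w:r(w)=v\}$. $\mathcal{T}_+(G)$ is the norm-closed operator algebra generated by all $L_e$ and $P_v$. $\mathfrak{M}_{G,x}$ is the set of characters $\rho$ of $\mathcal{T}_+(G)$ with $\rho(P_x)=1$. A two-dimensional nest representation is a continuous homomorphism $\pi$ of $\mathcal{T}_+(G)$ onto the algebra of operators on a 2-dimensional Hilbert space leaving a fixed one-dimensional subspace $N$ invariant; with unit vectors $h_2\in N$, $h_1\in N^\perp$, $\rho^{(i)}_\pi(A)=\langle\pi(A)h_i,h_i\rangle$.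 $\operatorname{rep}_{x,y}(\mathcal{T}_+(G))$ is the set of such $\pi$ with $\rho^{(1)}_\pi\in\mathfrak{M}_{G,x}$, $\rho^{(2)}_\pi\in\mathfrak{M}_{G,y}$; $\mathcal{K}_{x,y}=\bigcap\{\ker\pi:\pi\in\operatorname{rep}_{x,y}(\mathcal{T}_+(G))\}$; $\operatorname{rad}$ is the Jacobson radical. A subset of a closed ideal $\mathcal{I}$ of a Banach algebra is a generating set if the closed ideal it generates is $\mathcal{I}$; $\mathcal{I}$ is $n$-generated if $n$ is the smallest cardinality of a generating set, and $\infty$-generated means there is no finite generating set. *)

theory Defs
  imports "HOL-Analysis.Analysis"
begin

record ('v, 'e) digraph =
  verts :: "'v set"
  edges :: "'e set"
  rng   :: "'e \<Rightarrow> 'v"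
  src   :: "'e \<Rightarrow> 'v"

definition digraph_wf :: "('v, 'e) digraph \<Rightarrow> bool" where
  "digraph_wf G \<longleftrightarrow> (\<forall>e\<in>edges G. rng G e \<in> verts G \<and> src G e \<in> verts G)"

text \<open>A path \<open>e_k \<dots> e_1\<close> is encoded as the pair \<open>(r(w), [e_k, \<dots>, e_1])\<close>;
  a vertex \<open>v\<close> is the path \<open>(v, [])\<close>.  Hence \<open>r(w) = fst w\<close>.\<close>
type_synonym ('v, 'e) path = "'v \<times> 'e list"

definition is_path :: "('v, 'e) digraph \<Rightarrow> ('v, 'e) path \<Rightarrow> bool" where
  "is_path G w \<longleftrightarrow> (case w of (v, es) \<Rightarrow>
      set es \<subseteq> edges G \<and>
      (es = [] \<longrightarrow> v \<in> verts G) \<and>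
      (es \<noteq> [] \<longrightarrow> v = rng G (hd es)) \<and>
      (\<forall>i. Suc i < length es \<longrightarrow> src G (es ! i) = rng G (es ! Suc i)))"

type_synonym ('v, 'e) vect = "('v, 'e) path \<Rightarrow> complex"
type_synonym ('v, 'e) oper = "('v, 'e) vect \<Rightarrow> ('v, 'e) vect"

definition ell2 :: "('v, 'e) digraph \<Rightarrow> ('v, 'e) vect set" where
  "ell2 G = {f. (\<forall>w. f w \<noteq> 0 \<longrightarrow> is_path G w) \<and>
                (\<lambda>w. (cmod (f w))\<^sup>2) summable_on UNIV}"

definition hnorm :: "('v, 'e) vect \<Rightarrow> real" where
  "hnorm f = sqrt (infsum (\<lambda>w. (cmod (f w))\<^sup>2) UNIV)"

text \<open>Operators are represented extensionally: they vanish outside \<open>ell2 G\<close>.\<close>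
definition is_bop :: "('v, 'e) digraph \<Rightarrow> ('v, 'e) oper \<Rightarrow> bool" where
  "is_bop G A \<longleftrightarrow>
     (\<forall>f\<in>ell2 G. A f \<in> ell2 G) \<and>
     (\<forall>f. f \<notin> ell2 G \<longrightarrow> A f = (\<lambda>_. 0)) \<and>
     (\<forall>f\<in>ell2 G. \<forall>g\<in>ell2 G. \<forall>c::complex.
         A (\<lambda>w. c * f w + g w) = (\<lambda>w. c * A f w + A g w)) \<and>
     (\<exists>C. \<forall>f\<in>ell2 G. hnorm (A f) \<le> C * hnorm f)"

definition opnorm :: "('v, 'e) digraph \<Rightarrow> ('v, 'e) oper \<Rightarrow> real" where
  "opnorm G A = Sup {hnorm (A f) | f. f \<in> ell2 G \<and> hnorm f \<le> 1}"

definition op_add :: "('v, 'e) oper \<Rightarrow> ('v, 'e) oper \<Rightarrow> ('v, 'e) oper" where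
  "op_add A B = (\<lambda>f w. A f w + B f w)"

definition op_scale :: "complex \<Rightarrow> ('v, 'e) oper \<Rightarrow> ('v, 'e) oper" where
  "op_scale c A = (\<lambda>f w. c * A f w)"

definition op_mult :: "('v, 'e) oper \<Rightarrow> ('v, 'e) oper \<Rightarrow> ('v, 'e) oper" where
  "op_mult A B = A \<circ> B"

definition op_zero :: "('v, 'e) oper" where
  "op_zero = (\<lambda>f w. 0)"

definition op_diff :: "('v, 'e) oper \<Rightarrow> ('v, 'e) oper \<Rightarrow> ('v, 'e) oper" where
  "op_diff A B = op_add A (op_scale (-1) B)"

text \<open>\<open>L_e \<xi>_w = \<xi>_{ew}\<close> if \<open>s(e) = r(w)\<close>, and \<open>0\<close> otherwise.\<close>
definition L :: "('v, 'e) digraph \<Rightarrow> 'e \<Rightarrow> ('v, 'e) oper" where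
  "L G e = (\<lambda>f. if f \<in> ell2 G then
               (\<lambda>w. if is_path G w \<and> snd w \<noteq> [] \<and> hd (snd w) = e
                    then f (src G e, tl (snd w)) else 0)
             else (\<lambda>_. 0))"

definition P :: "('v, 'e) digraph \<Rightarrow> 'v \<Rightarrow> ('v, 'e) oper" where
  "P G v = (\<lambda>f. if f \<in> ell2 G then (\<lambda>w. if fst w = v then f w else 0) else (\<lambda>_. 0))"

inductive_set alg_gen :: "('v, 'e) oper set \<Rightarrow> ('v, 'e) oper set" for S where
  gen: "A \<in> S \<Longrightarrow> A \<in> alg_gen S"
| add: "A \<in> alg_gen S \<Longrightarrow> B \<in> alg_gen S \<Longrightarrow> op_add A B \<in> alg_gen S"
| scale: "A \<in> alg_gen S \<Longrightarrow> op_scale c A \<in> alg_gen S"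
| mult: "A \<in> alg_gen S \<Longrightarrow> B \<in> alg_gen S \<Longrightarrow> op_mult A B \<in> alg_gen S"

definition Tplus :: "('v, 'e) digraph \<Rightarrow> ('v, 'e) oper set" where
  "Tplus G = {A. is_bop G A \<and>
     (\<forall>\<epsilon>>0. \<exists>B\<in>alg_gen (L G ` edges G \<union> P G ` verts G). opnorm G (op_diff A B) < \<epsilon>)}"

definition character :: "('v, 'e) digraph \<Rightarrow> (('v, 'e) oper \<Rightarrow> complex) \<Rightarrow> bool" where
  "character G \<rho> \<longleftrightarrow>
     (\<forall>A\<in>Tplus G. \<forall>B\<in>Tplus G. \<rho> (op_add A B) = \<rho> A + \<rho> B \<and>
                                 \<rho> (op_mult A B) = \<rho> A * \<rho> B) \<and>
     (\<forall>A\<in>Tplus G. \<forall>c. \<rho> (op_scale c A) = c * \<rho> A) \<and>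
     (\<exists>A\<in>Tplus G. \<rho> A \<noteq> 0)"

definition Mchar :: "('v, 'e) digraph \<Rightarrow> 'v \<Rightarrow> (('v, 'e) oper \<Rightarrow> complex) set" where
  "Mchar G x = {\<rho>. character G \<rho> \<and> \<rho> (P G x) = 1}"

text \<open>The 2-dimensional Hilbert space is taken to be \<open>\<complex>^2\<close> with \<open>N = span{e_2}\<close>,
  \<open>h_1 = e_1 \<in> N\<^sup>\<bottom>\<close>, \<open>h_2 = e_2 \<in> N\<close>. Operators leaving \<open>N\<close> invariant are the matrices
  \<open>M\<close> with \<open>M $ 1 $ 2 = 0\<close>, and \<open>\<langle>M h_i, h_i\<rangle> = M $ i $ i\<close>.\<close>
definition nest_rep :: "('v, 'e) digraph \<Rightarrow> (('v, 'e) oper \<Rightarrow> complex^2^2) \<Rightarrow> bool" where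
  "nest_rep G \<pi> \<longleftrightarrow>
     (\<forall>A\<in>Tplus G. \<forall>B\<in>Tplus G. \<pi> (op_add A B) = \<pi> A + \<pi> B \<and>
                                 \<pi> (op_mult A B) = \<pi> A ** \<pi> B) \<and>
     (\<forall>A\<in>Tplus G. \<forall>c. \<pi> (op_scale c A) = mat c ** \<pi> A) \<and>
     (\<exists>C. \<forall>A\<in>Tplus G. norm (\<pi> A) \<le> C * opnorm G A) \<and>
     \<pi> ` Tplus G = {M. M $ 1 $ 2 = 0}"

definition rep_xy :: "('v, 'e) digraph \<Rightarrow> 'v \<Rightarrow> 'v \<Rightarrow> (('v, 'e) oper \<Rightarrow> complex^2^2) set" where
  "rep_xy G x y = {\<pi>. nest_rep G \<pi> \<and> (\<lambda>A. \<pi> A $ 1 $ 1) \<in> Mchar G x \<and> (\<lambda>A. \<pi> A $ 2 $ 2) \<in> Mchar G y}"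

definition Kxy :: "('v, 'e) digraph \<Rightarrow> 'v \<Rightarrow> 'v \<Rightarrow> ('v, 'e) oper set" where
  "Kxy G x y = {A \<in> Tplus G. \<forall>\<pi>\<in>rep_xy G x y. \<pi> A = 0}"

record 'a calg =
  carr :: "'a set"
  plus :: "'a \<Rightarrow> 'a \<Rightarrow> 'a"
  times :: "'a \<Rightarrow> 'a \<Rightarrow> 'a"
  scal :: "complex \<Rightarrow> 'a \<Rightarrow> 'a"
  zer :: "'a"
  nrm :: "'a \<Rightarrow> real"

text \<open>\<open>z\<close> is left quasi-regular: \<open>\<exists>c. c + z - c z = 0\<close>, i.e. \<open>(1 - c)(1 - z) = 1\<close> in the unitization.\<close>
definition lqr :: "'a calg \<Rightarrow> 'a \<Rightarrow> bool" where
  "lqr A z \<longleftrightarrow> (\<exists>c\<in>carr A. plus A c (plus A z (scal A (-1) (times A c z))) = zer A)"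

text \<open>Jacobson radical: the largest left quasi-regular left ideal, i.e. the set of \<open>a\<close> such that
  the left ideal \<open>A\<^sup>1 a = {\<lambda> a + b a}\<close> generated by \<open>a\<close> consists of left quasi-regular elements.\<close>
definition jrad :: "'a calg \<Rightarrow> 'a set" where
  "jrad A = {a \<in> carr A. \<forall>t. \<forall>b\<in>carr A. lqr A (plus A (scal A t a) (times A b a))}"

definition is_ideal :: "'a calg \<Rightarrow> 'a set \<Rightarrow> bool" where
  "is_ideal A J \<longleftrightarrow> J \<subseteq> carr A \<and> zer A \<in> J \<and>
     (\<forall>a\<in>J. \<forall>b\<in>J. plus A a b \<in> J) \<and>
     (\<forall>a\<in>J. \<forall>c. scal A c a \<in> J) \<and>
     (\<forall>a\<in>J. \<forall>b\<in>carr A. times A b a \<in> J \<and> times A a b \<in> J)"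

definition is_closed_in :: "'a calg \<Rightarrow> 'a set \<Rightarrow> bool" where
  "is_closed_in A J \<longleftrightarrow> (\<forall>a\<in>carr A.
     (\<forall>\<epsilon>>0. \<exists>b\<in>J. nrm A (plus A a (scal A (-1) b)) < \<epsilon>) \<longrightarrow> a \<in> J)"

definition closed_ideal_gen :: "'a calg \<Rightarrow> 'a set \<Rightarrow> 'a set" where
  "closed_ideal_gen A S = \<Inter>{J. is_ideal A J \<and> is_closed_in A J \<and> S \<subseteq> J}"

definition generating_set :: "'a calg \<Rightarrow> 'a set \<Rightarrow> 'a set \<Rightarrow> bool" where
  "generating_set A I S \<longleftrightarrow> S \<subseteq> I \<and> closed_ideal_gen A S = I"

definition n_generated :: "'a calg \<Rightarrow> 'a set \<Rightarrow> enat \<Rightarrow> bool" where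
  "n_generated A I n \<longleftrightarrow>
     (if n = \<infinity> then \<not> (\<exists>S. finite S \<and> generating_set A I S)
      else (\<exists>S. finite S \<and> generating_set A I S \<and> enat (card S) = n) \<and>
           (\<forall>S. finite S \<and> generating_set A I S \<longrightarrow> n \<le> enat (card S)))"

definition coset :: "('v, 'e) oper set \<Rightarrow> ('v, 'e) oper \<Rightarrow> ('v, 'e) oper set" where
  "coset K A = (\<lambda>k. op_add A k) ` K"

definition crep :: "('v, 'e) oper set \<Rightarrow> ('v, 'e) oper" where
  "crep C = (SOME a. a \<in> C)"

definition quot_alg :: "('v, 'e) digraph \<Rightarrow> ('v, 'e) oper set \<Rightarrow> ('v, 'e) oper set \<Rightarrow> ('v, 'e) oper set calg" where
  "quot_alg G T K =
     \<lparr> carr = coset K ` T,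
       plus = (\<lambda>C D. coset K (op_add (crep C) (crep D))),
       times = (\<lambda>C D. coset K (op_mult (crep C) (crep D))),
       scal = (\<lambda>c C. coset K (op_scale c (crep C))),
       zer = coset K op_zero,
       nrm = (\<lambda>C. Inf (opnorm G ` C)) \<rparr>"

definition QA :: "('v, 'e) digraph \<Rightarrow> 'v \<Rightarrow> 'v \<Rightarrow> ('v, 'e) oper set calg" where
  "QA G x y = quot_alg G (Tplus G) (Kxy G x y)"

definition edges_from_to :: "('v, 'e) digraph \<Rightarrow> 'v \<Rightarrow> 'v \<Rightarrow> 'e set" where
  "edges_from_to G x y = {e \<in> edges G. src G e = x \<and> rng G e = y}"

definition ecard :: "'a set \<Rightarrow> enat" where
  "ecard S = (if finite S then enat (card S) else \<infinity>)"

end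

theory Submission
  imports Defs
begin

text \<open>Every \<open>\<pi> \<in> rep\<^sub>x\<^sub>,\<^sub>y\<close> maps \<open>\<T>\<^sub>+(G)\<close> onto the lower triangular \<open>2\<times>2\<close> matrices, and each
  edge \<open>e\<close> from \<open>x\<close> to \<open>y\<close> gives such a representation, the compression of \<open>\<T>\<^sub>+(G)\<close> to the span of
  \<open>\<xi>\<^sub>x\<close> and \<open>\<xi>\<^sub>e\<close>. The radical of \<open>\<T>\<^sub>+(G)/\<K>\<^sub>x\<^sub>,\<^sub>y\<close> consists of the cosets all of whose images
  have zero diagonal. Such a coset is also the coset of its compression \<open>P\<^sub>y A P\<^sub>x\<close>, and approximating
  \<open>A\<close> by polynomials in the generators shows that the cosets of the \<open>L\<^sub>e\<close> generate the radical.
  Conversely, on the radical the \<open>(2,1)\<close> entries of the edge representations are multiplied by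
  scalars that do not depend on the edge, so a finite generating set with fewer elements than
  there are edges would yield a linear relation among these entries that defines a closed ideal
  containing the radical but not every \<open>L\<^sub>e\<close>.\<close>

lemma ell2_summable: "f \<in> ell2 G \<Longrightarrow> (\<lambda>w. (cmod (f w))\<^sup>2) summable_on UNIV"
  unfolding ell2_def by simp

lemma ell2_support_is_path: "f \<in> ell2 G \<Longrightarrow> f w \<noteq> 0 \<Longrightarrow> is_path G w"
  unfolding ell2_def by (cases w) auto

lemma zero_in_ell2 [simp]: "(\<lambda>_. 0) \<in> ell2 G"
  unfolding ell2_def by simp

lemma cmod_add_squared_le: "(cmod (a + b))\<^sup>2 \<le> 2 * (cmod a)\<^sup>2 + 2 * (cmod b)\<^sup>2"
proof -
  have "(cmod (a + b))\<^sup>2 \<le> (cmod a + cmod b)\<^sup>2"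
    by (simp add: norm_triangle_ineq power_mono)
  also have "\<dots> \<le> 2 * (cmod a)\<^sup>2 + 2 * (cmod b)\<^sup>2"
    using zero_le_power2[of "cmod a - cmod b"] by (simp add: power2_eq_square algebra_simps)
  finally show ?thesis .
qed

lemma ell2_lincomb:
  assumes f: "f \<in> ell2 G" and g: "g \<in> ell2 G"
  shows "(\<lambda>w. c * f w + g w) \<in> ell2 G"
proof -
  have bound_summable: "(\<lambda>w. 2 * (cmod c)\<^sup>2 * (cmod (f w))\<^sup>2 + 2 * (cmod (g w))\<^sup>2) summable_on UNIV"
    using ell2_summable[OF f] ell2_summable[OF g]
    by (intro summable_on_add summable_on_cmult_right) auto
  have "(\<lambda>w. (cmod (c * f w + g w))\<^sup>2) summable_on UNIV"
  proof (rule summable_on_comparison_test[OF bound_summable])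
    fix w
    show "(cmod (c * f w + g w))\<^sup>2 \<le> 2 * (cmod c)\<^sup>2 * (cmod (f w))\<^sup>2 + 2 * (cmod (g w))\<^sup>2"
      using cmod_add_squared_le[of "c * f w" "g w"] by (simp add: norm_mult power_mult_distrib)
  qed simp
  moreover have "is_path G w" if "c * f w + g w \<noteq> 0" for w
    using that ell2_support_is_path[OF f, of w] ell2_support_is_path[OF g, of w]
    by (cases "f w = 0") auto
  ultimately show ?thesis
    unfolding ell2_def by blast
qed

lemma ell2_add: "f \<in> ell2 G \<Longrightarrow> g \<in> ell2 G \<Longrightarrow> (\<lambda>w. f w + g w) \<in> ell2 G"
  using ell2_lincomb[of f G g 1] by simp

lemma ell2_scale: "f \<in> ell2 G \<Longrightarrow> (\<lambda>w. c * f w) \<in> ell2 G"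
  using ell2_lincomb[of f G "\<lambda>_. 0" c] by simp

lemma hnorm_nonneg [simp]: "0 \<le> hnorm f"
  unfolding hnorm_def by (simp add: infsum_nonneg)

lemma hnorm_zero [simp]: "hnorm (\<lambda>_. 0) = 0"
  unfolding hnorm_def by simp

lemma hnorm_scale: "f \<in> ell2 G \<Longrightarrow> hnorm (\<lambda>w. c * f w) = cmod c * hnorm f"
  unfolding hnorm_def
  by (simp add: norm_mult power_mult_distrib infsum_cmult_right' real_sqrt_mult)

lemma L2_set_le_hnorm:
  assumes "f \<in> ell2 G" and "finite F"
  shows "L2_set (\<lambda>w. cmod (f w)) F \<le> hnorm f"
proof -
  have "(\<Sum>w\<in>F. (cmod (f w))\<^sup>2) \<le> infsum (\<lambda>w. (cmod (f w))\<^sup>2) UNIV"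
    using ell2_summable[OF assms(1)] assms(2) by (intro finite_sum_le_infsum) auto
  then show ?thesis
    unfolding hnorm_def L2_set_def by simp
qed

lemma norm_le_hnorm: "f \<in> ell2 G \<Longrightarrow> cmod (f w) \<le> hnorm f"
  using L2_set_le_hnorm[of f G "{w}"] by simp

lemma hnorm_triangle:
  assumes f: "f \<in> ell2 G" and g: "g \<in> ell2 G"
  shows "hnorm (\<lambda>w. f w + g w) \<le> hnorm f + hnorm g"
proof -
  have "infsum (\<lambda>w. (cmod (f w + g w))\<^sup>2) UNIV \<le> (hnorm f + hnorm g)\<^sup>2"
  proof (rule infsum_le_finite_sums)
    show "(\<lambda>w. (cmod (f w + g w))\<^sup>2) summable_on UNIV"
      using ell2_summable[OF ell2_add[OF f g]] .
    fix F :: "('a \<times> 'b list) set"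
    assume "finite F" "F \<subseteq> UNIV"
    have "L2_set (\<lambda>w. cmod (f w + g w)) F \<le> L2_set (\<lambda>w. cmod (f w) + cmod (g w)) F"
      by (rule L2_set_mono) (auto simp: norm_triangle_ineq)
    also have "\<dots> \<le> L2_set (\<lambda>w. cmod (f w)) F + L2_set (\<lambda>w. cmod (g w)) F"
      by (rule L2_set_triangle_ineq)
    also have "\<dots> \<le> hnorm f + hnorm g"
      using L2_set_le_hnorm[OF f \<open>finite F\<close>] L2_set_le_hnorm[OF g \<open>finite F\<close>] by simp
    finally have "(L2_set (\<lambda>w. cmod (f w + g w)) F)\<^sup>2 \<le> (hnorm f + hnorm g)\<^sup>2"
      by (simp add: power_mono)
    then show "(\<Sum>w\<in>F. (cmod (f w + g w))\<^sup>2) \<le> (hnorm f + hnorm g)\<^sup>2"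
      by (simp add: L2_set_def sum_nonneg)
  qed
  then show ?thesis
    unfolding hnorm_def[of "\<lambda>w. f w + g w"] by (simp add: real_le_lsqrt)
qed

lemma hnorm_eq_0_imp_zero: "f \<in> ell2 G \<Longrightarrow> hnorm f = 0 \<Longrightarrow> f = (\<lambda>_. 0)"
  using norm_le_hnorm[of f G] by fastforce

lemma hnorm_reindex_le:
  assumes f: "f \<in> ell2 G" and inj: "inj_on h D"
    and on_D: "\<And>w. w \<in> D \<Longrightarrow> g w = f (h w)" and off_D: "\<And>w. w \<notin> D \<Longrightarrow> g w = 0"
  shows "(\<lambda>w. (cmod (g w))\<^sup>2) summable_on UNIV" and "hnorm g \<le> hnorm f"
proof -
  let ?F = "\<lambda>w. (cmod (f w))\<^sup>2" and ?g = "\<lambda>w. (cmod (g w))\<^sup>2"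
  have F_sum: "?F summable_on UNIV"
    using ell2_summable[OF f] .
  have F_sum_image: "?F summable_on (h ` D)"
    using summable_on_subset[OF F_sum] by simp
  have g_UNIV_D: "?g summable_on UNIV \<longleftrightarrow> ?g summable_on D" "infsum ?g UNIV = infsum ?g D"
    by (rule summable_on_cong_neutral infsum_cong_neutral; simp add: off_D)+
  have g_D: "?g summable_on D \<longleftrightarrow> (?F \<circ> h) summable_on D" "infsum ?g D = infsum (?F \<circ> h) D"
    by (rule summable_on_cong infsum_cong; simp add: on_D)+
  show "?g summable_on UNIV"
    using F_sum_image g_UNIV_D g_D by (simp add: summable_on_reindex[OF inj, symmetric])
  have "infsum ?g UNIV = infsum ?F (h ` D)"
    using g_UNIV_D g_D by (simp add: infsum_reindex[OF inj])
  also have "\<dots> \<le> infsum ?F UNIV"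
    by (rule infsum_mono_neutral[OF F_sum_image F_sum]) auto
  finally show "hnorm g \<le> hnorm f"
    unfolding hnorm_def by simp
qed

definition xi :: "('v, 'e) path \<Rightarrow> ('v, 'e) vect" where
  "xi p = (\<lambda>w. if w = p then 1 else 0)"

lemma xi_in_ell2: "is_path G p \<Longrightarrow> xi p \<in> ell2 G"
proof -
  assume "is_path G p"
  moreover have "(\<lambda>w. (cmod (xi p w))\<^sup>2) summable_on {p}"
    by simp
  then have "(\<lambda>w. (cmod (xi p w))\<^sup>2) summable_on UNIV"
    by (rule summable_on_cong_neutral[THEN iffD1, rotated -1]) (auto simp: xi_def)
  ultimately show ?thesis
    unfolding ell2_def by (auto simp: xi_def)
qed

lemma hnorm_xi [simp]: "hnorm (xi p) = 1"
proof -
  have "infsum (\<lambda>w. (cmod (xi p w))\<^sup>2) UNIV = infsum (\<lambda>w. (cmod (xi p w))\<^sup>2) {p}"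
    by (rule infsum_cong_neutral) (auto simp: xi_def)
  then show ?thesis
    unfolding hnorm_def by (simp add: xi_def)
qed

lemma bop_maps_ell2: "is_bop G A \<Longrightarrow> f \<in> ell2 G \<Longrightarrow> A f \<in> ell2 G"
  unfolding is_bop_def by blast

lemma bop_outside_ell2: "is_bop G A \<Longrightarrow> f \<notin> ell2 G \<Longrightarrow> A f = (\<lambda>_. 0)"
  unfolding is_bop_def by blast

lemma bop_linear: "is_bop G A \<Longrightarrow> f \<in> ell2 G \<Longrightarrow> g \<in> ell2 G \<Longrightarrow>
    A (\<lambda>w. c * f w + g w) = (\<lambda>w. c * A f w + A g w)"
  unfolding is_bop_def by blast

lemma bop_zero: "is_bop G A \<Longrightarrow> A (\<lambda>_. 0) = (\<lambda>_. 0)"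
  using bop_linear[of G A "\<lambda>_. 0" "\<lambda>_. 0" 1] by (simp add: fun_eq_iff)

lemma bop_scale: "is_bop G A \<Longrightarrow> f \<in> ell2 G \<Longrightarrow> A (\<lambda>w. c * f w) = (\<lambda>w. c * A f w)"
  using bop_linear[of G A f "\<lambda>_. 0" c] bop_zero[of G A] by simp

lemma bop_bounded:
  assumes "is_bop G A"
  shows "\<exists>C\<ge>0. \<forall>f\<in>ell2 G. hnorm (A f) \<le> C * hnorm f"
proof -
  obtain C where C: "\<forall>f\<in>ell2 G. hnorm (A f) \<le> C * hnorm f"
    using assms unfolding is_bop_def by blast
  have "hnorm (A f) \<le> max C 0 * hnorm f" if "f \<in> ell2 G" for f
    using C that mult_right_mono[of C "max C 0" "hnorm f"] by fastforce
  then show ?thesis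
    by (intro exI[of _ "max C 0"]) simp
qed

lemma hnorm_le_opnorm:
  assumes A: "is_bop G A" and f: "f \<in> ell2 G" "hnorm f \<le> 1"
  shows "hnorm (A f) \<le> opnorm G A"
  unfolding opnorm_def
proof (rule cSup_upper)
  obtain C where C: "C \<ge> 0" "\<forall>f\<in>ell2 G. hnorm (A f) \<le> C * hnorm f"
    using bop_bounded[OF A] by blast
  have "hnorm (A f) \<le> C" if "f \<in> ell2 G" "hnorm f \<le> 1" for f
    using C that mult_left_le[of "hnorm f" C] by fastforce
  then show "bdd_above {hnorm (A f) | f. f \<in> ell2 G \<and> hnorm f \<le> 1}"
    by (intro bdd_aboveI[of _ C]) blast
qed (use f in auto)

lemma opnorm_nonneg: "is_bop G A \<Longrightarrow> 0 \<le> opnorm G A"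
  by (rule order_trans[OF hnorm_nonneg hnorm_le_opnorm[of G A "\<lambda>_. 0"]]) simp_all

lemma opnorm_leI:
  assumes "\<And>f. f \<in> ell2 G \<Longrightarrow> hnorm f \<le> 1 \<Longrightarrow> hnorm (A f) \<le> M"
  shows "opnorm G A \<le> M"
  unfolding opnorm_def
proof (rule cSup_least)
  show "{hnorm (A f) | f. f \<in> ell2 G \<and> hnorm f \<le> 1} \<noteq> {}"
    by (auto intro!: exI[of _ "\<lambda>_. 0"])
qed (use assms in blast)

lemma hnorm_apply_le:
  assumes A: "is_bop G A" and f: "f \<in> ell2 G"
  shows "hnorm (A f) \<le> opnorm G A * hnorm f"
proof (cases "hnorm f = 0")
  case True
  then show ?thesis
    using hnorm_eq_0_imp_zero[OF f] bop_zero[OF A] by simp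
next
  case False
  then have pos: "hnorm f > 0"
    using hnorm_nonneg[of f] by linarith
  define c where "c = complex_of_real (1 / hnorm f)"
  have cmod_c: "cmod c = 1 / hnorm f"
    using pos by (simp only: c_def norm_of_real) simp
  have "hnorm (A f) / hnorm f = hnorm (A (\<lambda>w. c * f w))"
    using hnorm_scale[OF bop_maps_ell2[OF A f]] bop_scale[OF A f] cmod_c by simp
  also have "\<dots> \<le> opnorm G A"
    using pos hnorm_scale[OF f, of c] cmod_c
    by (intro hnorm_le_opnorm[OF A] ell2_scale[OF f]) simp
  finally show ?thesis
    using pos by (simp add: divide_le_eq)
qed

lemma norm_apply_le: "is_bop G A \<Longrightarrow> f \<in> ell2 G \<Longrightarrow> cmod (A f w) \<le> opnorm G A * hnorm f"
  using norm_le_hnorm[OF bop_maps_ell2, of G A f w] hnorm_apply_le[of G A f] by simp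

lemma norm_apply_xi_le: "is_bop G A \<Longrightarrow> is_path G p \<Longrightarrow> cmod (A (xi p) w) \<le> opnorm G A"
  using norm_apply_le[OF _ xi_in_ell2] by fastforce

lemma bopI:
  assumes "\<And>f. f \<in> ell2 G \<Longrightarrow> A f \<in> ell2 G"
    and "\<And>f. f \<notin> ell2 G \<Longrightarrow> A f = (\<lambda>_. 0)"
    and "\<And>f g c. f \<in> ell2 G \<Longrightarrow> g \<in> ell2 G \<Longrightarrow> A (\<lambda>w. c * f w + g w) = (\<lambda>w. c * A f w + A g w)"
    and "\<And>f. f \<in> ell2 G \<Longrightarrow> hnorm (A f) \<le> C * hnorm f"
  shows "is_bop G A"
  unfolding is_bop_def using assms by blast

lemma bop_op_add:
  assumes A: "is_bop G A" and B: "is_bop G B"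
  shows "is_bop G (op_add A B)"
proof (rule bopI)
  fix f assume f: "f \<in> ell2 G"
  have "hnorm (op_add A B f) \<le> hnorm (A f) + hnorm (B f)"
    unfolding op_add_def by (rule hnorm_triangle[OF bop_maps_ell2[OF A f] bop_maps_ell2[OF B f]])
  also have "\<dots> \<le> (opnorm G A + opnorm G B) * hnorm f"
    using hnorm_apply_le[OF A f] hnorm_apply_le[OF B f] by (simp add: distrib_right)
  finally show "hnorm (op_add A B f) \<le> (opnorm G A + opnorm G B) * hnorm f" .
next
  fix f g c assume "f \<in> ell2 G" "g \<in> ell2 G"
  then show "op_add A B (\<lambda>w. c * f w + g w) = (\<lambda>w. c * op_add A B f w + op_add A B g w)"
    unfolding op_add_def by (simp only: bop_linear[OF A] bop_linear[OF B]) (simp add: algebra_simps)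
qed (use A B in \<open>auto simp: op_add_def bop_outside_ell2 ell2_add bop_maps_ell2\<close>)

lemma bop_op_scale:
  assumes A: "is_bop G A"
  shows "is_bop G (op_scale c A)"
proof (rule bopI)
  fix f assume f: "f \<in> ell2 G"
  show "hnorm (op_scale c A f) \<le> (cmod c * opnorm G A) * hnorm f"
    unfolding op_scale_def hnorm_scale[OF bop_maps_ell2[OF A f]]
    using hnorm_apply_le[OF A f] by (simp add: mult_left_mono mult.assoc)
next
  fix f g d assume "f \<in> ell2 G" "g \<in> ell2 G"
  then show "op_scale c A (\<lambda>w. d * f w + g w) = (\<lambda>w. d * op_scale c A f w + op_scale c A g w)"
    unfolding op_scale_def by (simp only: bop_linear[OF A]) (simp add: algebra_simps)
qed (use A in \<open>auto simp: op_scale_def bop_outside_ell2 ell2_scale bop_maps_ell2\<close>)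

lemma bop_op_mult:
  assumes A: "is_bop G A" and B: "is_bop G B"
  shows "is_bop G (op_mult A B)"
proof (rule bopI)
  fix f assume f: "f \<in> ell2 G"
  have "hnorm (op_mult A B f) \<le> opnorm G A * hnorm (B f)"
    unfolding op_mult_def using hnorm_apply_le[OF A bop_maps_ell2[OF B f]] by simp
  also have "\<dots> \<le> opnorm G A * (opnorm G B * hnorm f)"
    using hnorm_apply_le[OF B f] opnorm_nonneg[OF A] by (rule mult_left_mono)
  finally show "hnorm (op_mult A B f) \<le> (opnorm G A * opnorm G B) * hnorm f"
    by (simp add: mult.assoc)
qed (use A B in \<open>auto simp: op_mult_def bop_outside_ell2 bop_linear bop_zero bop_maps_ell2\<close>)

lemma bop_op_zero: "is_bop G op_zero"
  by (rule bopI[where C = 0]) (simp_all add: op_zero_def)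

lemma bop_op_diff: "is_bop G A \<Longrightarrow> is_bop G B \<Longrightarrow> is_bop G (op_diff A B)"
  unfolding op_diff_def by (intro bop_op_add bop_op_scale)

lemma opnorm_add_le:
  assumes A: "is_bop G A" and B: "is_bop G B"
  shows "opnorm G (op_add A B) \<le> opnorm G A + opnorm G B"
proof (rule opnorm_leI)
  fix f assume f: "f \<in> ell2 G" "hnorm f \<le> 1"
  have "hnorm (op_add A B f) \<le> hnorm (A f) + hnorm (B f)"
    unfolding op_add_def by (rule hnorm_triangle[OF bop_maps_ell2[OF A f(1)] bop_maps_ell2[OF B f(1)]])
  also have "\<dots> \<le> opnorm G A + opnorm G B"
    using hnorm_le_opnorm[OF A f] hnorm_le_opnorm[OF B f] by simp
  finally show "hnorm (op_add A B f) \<le> opnorm G A + opnorm G B" .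
qed

lemma opnorm_scale_le:
  assumes A: "is_bop G A"
  shows "opnorm G (op_scale c A) \<le> cmod c * opnorm G A"
proof (rule opnorm_leI)
  fix f assume f: "f \<in> ell2 G" "hnorm f \<le> 1"
  show "hnorm (op_scale c A f) \<le> cmod c * opnorm G A"
    unfolding op_scale_def hnorm_scale[OF bop_maps_ell2[OF A f(1)]]
    using hnorm_le_opnorm[OF A f] by (simp add: mult_left_mono)
qed

lemma opnorm_mult_le:
  assumes A: "is_bop G A" and B: "is_bop G B"
  shows "opnorm G (op_mult A B) \<le> opnorm G A * opnorm G B"
proof (rule opnorm_leI)
  fix f assume f: "f \<in> ell2 G" "hnorm f \<le> 1"
  have "hnorm (op_mult A B f) \<le> opnorm G A * hnorm (B f)"
    unfolding op_mult_def using hnorm_apply_le[OF A bop_maps_ell2[OF B f(1)]] by simp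
  also have "\<dots> \<le> opnorm G A * opnorm G B"
    using hnorm_le_opnorm[OF B f] opnorm_nonneg[OF A] by (rule mult_left_mono)
  finally show "hnorm (op_mult A B f) \<le> opnorm G A * opnorm G B" .
qed

lemma opnorm_zero: "opnorm G op_zero = 0"
  using opnorm_leI[of G op_zero 0] opnorm_nonneg[OF bop_op_zero, of G]
  by (simp add: op_zero_def)

lemma norm_apply_diff_le:
  "is_bop G A \<Longrightarrow> is_bop G B \<Longrightarrow> g \<in> ell2 G \<Longrightarrow>
    cmod (A g w - B g w) \<le> opnorm G (op_diff A B) * hnorm g"
  using norm_apply_le[OF bop_op_diff, of G A B g w]
  by (simp add: op_diff_def op_add_def op_scale_def)

lemma L_apply: "f \<in> ell2 G \<Longrightarrow> L G e f = (\<lambda>w. if is_path G w \<and> snd w \<noteq> [] \<and> hd (snd w) = e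
    then f (src G e, tl (snd w)) else 0)"
  unfolding L_def by simp

lemma L_outside_ell2: "f \<notin> ell2 G \<Longrightarrow> L G e f = (\<lambda>_. 0)"
  unfolding L_def by simp

lemma P_apply: "f \<in> ell2 G \<Longrightarrow> P G v f = (\<lambda>w. if fst w = v then f w else 0)"
  unfolding P_def by simp

lemma P_outside_ell2: "f \<notin> ell2 G \<Longrightarrow> P G v f = (\<lambda>_. 0)"
  unfolding P_def by simp

lemma L_ell2_hnorm_le:
  assumes f: "f \<in> ell2 G"
  shows "L G e f \<in> ell2 G" and "hnorm (L G e f) \<le> hnorm f"
proof -
  let ?D = "{w. is_path G w \<and> snd w \<noteq> [] \<and> hd (snd w) = e}"
  have "inj_on (\<lambda>w. (src G e, tl (snd w))) ?D"
  proof (rule inj_onI)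
    fix u w assume u: "u \<in> ?D" and w: "w \<in> ?D" and eq: "(src G e, tl (snd u)) = (src G e, tl (snd w))"
    obtain a us b ws where uw: "u = (a, us)" "w = (b, ws)"
      by fastforce
    have "us = ws"
      using u w eq uw by (cases us; cases ws) auto
    moreover have "a = rng G e" "b = rng G e"
      using u w uw unfolding is_path_def by auto
    ultimately show "u = w"
      using uw by simp
  qed
  note reindex = hnorm_reindex_le[OF f this, of "L G e f"]
  show "hnorm (L G e f) \<le> hnorm f"
    by (rule reindex(2)) (auto simp: L_apply[OF f])
  have "(\<lambda>w. (cmod (L G e f w))\<^sup>2) summable_on UNIV"
    by (rule reindex(1)) (auto simp: L_apply[OF f])
  then show "L G e f \<in> ell2 G"
    unfolding ell2_def by (auto simp: L_apply[OF f])
qed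

lemma P_ell2_hnorm_le:
  assumes f: "f \<in> ell2 G"
  shows "P G v f \<in> ell2 G" and "hnorm (P G v f) \<le> hnorm f"
proof -
  let ?F = "\<lambda>w. (cmod (f w))\<^sup>2" and ?g = "\<lambda>w. (cmod (P G v f w))\<^sup>2"
  have F_sum: "?F summable_on UNIV"
    using ell2_summable[OF f] .
  have g_sum: "?g summable_on UNIV"
    by (rule summable_on_comparison_test[OF F_sum]) (auto simp: P_apply[OF f])
  have "infsum ?g UNIV \<le> infsum ?F UNIV"
    by (rule infsum_mono[OF g_sum F_sum]) (auto simp: P_apply[OF f])
  then show "hnorm (P G v f) \<le> hnorm f"
    unfolding hnorm_def by simp
  show "P G v f \<in> ell2 G"
    using g_sum ell2_support_is_path[OF f] unfolding ell2_def by (auto simp: P_apply[OF f])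
qed

lemma bop_L: "is_bop G (L G e)"
proof (rule bopI[where C = 1])
  show "L G e (\<lambda>w. c * f w + g w) = (\<lambda>w. c * L G e f w + L G e g w)"
    if "f \<in> ell2 G" "g \<in> ell2 G" for f g c
    using that by (simp add: L_apply ell2_lincomb fun_eq_iff)
qed (simp_all add: L_ell2_hnorm_le L_outside_ell2)

lemma bop_P: "is_bop G (P G v)"
proof (rule bopI[where C = 1])
  show "P G v (\<lambda>w. c * f w + g w) = (\<lambda>w. c * P G v f w + P G v g w)"
    if "f \<in> ell2 G" "g \<in> ell2 G" for f g c
    using that by (simp add: P_apply ell2_lincomb fun_eq_iff)
qed (simp_all add: P_ell2_hnorm_le P_outside_ell2)

abbreviation generators :: "('v, 'e) digraph \<Rightarrow> ('v, 'e) oper set" where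
  "generators G \<equiv> L G ` edges G \<union> P G ` verts G"

lemma alg_gen_bop: "B \<in> alg_gen (generators G) \<Longrightarrow> is_bop G B"
  by (induction rule: alg_gen.induct) (auto intro: bop_L bop_P bop_op_add bop_op_scale bop_op_mult)

lemma TplusI:
  assumes "is_bop G A" and "\<And>\<epsilon>. \<epsilon> > 0 \<Longrightarrow> \<exists>B\<in>alg_gen (generators G). opnorm G (op_diff A B) < \<epsilon>"
  shows "A \<in> Tplus G"
  unfolding Tplus_def using assms by blast

lemma Tplus_bop: "A \<in> Tplus G \<Longrightarrow> is_bop G A"
  unfolding Tplus_def by simp

lemma Tplus_approx:
  "A \<in> Tplus G \<Longrightarrow> \<epsilon> > 0 \<Longrightarrow> \<exists>B\<in>alg_gen (generators G). opnorm G (op_diff A B) < \<epsilon>"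
  unfolding Tplus_def by simp

lemma alg_gen_subset_Tplus: "alg_gen (generators G) \<subseteq> Tplus G"
proof
  fix B assume B: "B \<in> alg_gen (generators G)"
  have "op_diff B B = op_zero"
    by (simp add: op_diff_def op_add_def op_scale_def op_zero_def)
  then show "B \<in> Tplus G"
    using B by (intro TplusI alg_gen_bop) (auto simp: opnorm_zero intro!: bexI[of _ B])
qed

lemma L_in_Tplus: "e \<in> edges G \<Longrightarrow> L G e \<in> Tplus G"
  using alg_gen_subset_Tplus alg_gen.gen[of "L G e" "generators G"] by auto

lemma P_in_Tplus: "v \<in> verts G \<Longrightarrow> P G v \<in> Tplus G"
  using alg_gen_subset_Tplus alg_gen.gen[of "P G v" "generators G"] by auto

lemma Tplus_add:
  assumes A: "A \<in> Tplus G" and B: "B \<in> Tplus G"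
  shows "op_add A B \<in> Tplus G"
proof (rule TplusI)
  show "is_bop G (op_add A B)"
    using Tplus_bop[OF A] Tplus_bop[OF B] by (rule bop_op_add)
  fix \<epsilon> :: real assume "\<epsilon> > 0"
  then obtain A' B' where A': "A' \<in> alg_gen (generators G)" "opnorm G (op_diff A A') < \<epsilon>/2"
    and B': "B' \<in> alg_gen (generators G)" "opnorm G (op_diff B B') < \<epsilon>/2"
    using Tplus_approx[OF A, of "\<epsilon>/2"] Tplus_approx[OF B, of "\<epsilon>/2"] by auto
  have "op_diff (op_add A B) (op_add A' B') = op_add (op_diff A A') (op_diff B B')"
    by (simp add: op_diff_def op_add_def op_scale_def fun_eq_iff algebra_simps)
  then have "opnorm G (op_diff (op_add A B) (op_add A' B')) \<le> opnorm G (op_diff A A') + opnorm G (op_diff B B')"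
    using A B A'(1) B'(1) by (simp add: opnorm_add_le bop_op_diff Tplus_bop alg_gen_bop)
  then show "\<exists>C\<in>alg_gen (generators G). opnorm G (op_diff (op_add A B) C) < \<epsilon>"
    using A' B' by (intro bexI[of _ "op_add A' B'"] alg_gen.add) auto
qed

lemma Tplus_scale:
  assumes A: "A \<in> Tplus G"
  shows "op_scale c A \<in> Tplus G"
proof (rule TplusI)
  show "is_bop G (op_scale c A)"
    using Tplus_bop[OF A] by (rule bop_op_scale)
  fix \<epsilon> :: real assume "\<epsilon> > 0"
  then have "\<epsilon> / (cmod c + 1) > 0"
    by (simp add: add_nonneg_pos)
  then obtain A' where A': "A' \<in> alg_gen (generators G)" "opnorm G (op_diff A A') < \<epsilon> / (cmod c + 1)"
    using Tplus_approx[OF A] by auto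
  have bop_diff: "is_bop G (op_diff A A')"
    using A A'(1) by (simp add: bop_op_diff Tplus_bop alg_gen_bop)
  have "op_diff (op_scale c A) (op_scale c A') = op_scale c (op_diff A A')"
    by (simp add: op_diff_def op_add_def op_scale_def fun_eq_iff algebra_simps)
  then have "opnorm G (op_diff (op_scale c A) (op_scale c A')) \<le> (cmod c + 1) * opnorm G (op_diff A A')"
    using opnorm_scale_le[OF bop_diff, of c] opnorm_nonneg[OF bop_diff] by (simp add: distrib_right)
  also have "\<dots> < \<epsilon>"
    using A'(2) by (simp add: pos_less_divide_eq mult.commute add_nonneg_pos)
  finally show "\<exists>C\<in>alg_gen (generators G). opnorm G (op_diff (op_scale c A) C) < \<epsilon>"
    using A'(1) by (intro bexI[of _ "op_scale c A'"] alg_gen.scale)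
qed

lemma op_mult_diff_eq:
  assumes "is_bop G A" "is_bop G A'" "is_bop G B" "is_bop G B'"
  shows "op_diff (op_mult A B) (op_mult A' B') = op_add (op_mult A (op_diff B B')) (op_mult (op_diff A A') B')"
proof (intro ext)
  fix f w
  show "op_diff (op_mult A B) (op_mult A' B') f w = op_add (op_mult A (op_diff B B')) (op_mult (op_diff A A') B') f w"
  proof (cases "f \<in> ell2 G")
    case True
    have "A (\<lambda>w. -1 * B' f w + B f w) = (\<lambda>w. -1 * A (B' f) w + A (B f) w)"
      by (rule bop_linear) (use True assms in \<open>auto intro: bop_maps_ell2\<close>)
    then show ?thesis
      unfolding op_diff_def op_add_def op_scale_def op_mult_def by (simp add: add.commute)
  qed (use assms in \<open>simp add: op_diff_def op_add_def op_scale_def op_mult_def bop_outside_ell2 bop_zero\<close>)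
qed

lemma opnorm_le_add_diff:
  assumes "is_bop G B" "is_bop G B'"
  shows "opnorm G B' \<le> opnorm G B + opnorm G (op_diff B B')"
proof -
  have eq: "op_add B (op_scale (-1) (op_diff B B')) = B'"
    by (simp add: op_diff_def op_add_def op_scale_def fun_eq_iff)
  have "opnorm G B' \<le> opnorm G B + opnorm G (op_scale (-1) (op_diff B B'))"
    using opnorm_add_le[OF assms(1) bop_op_scale[OF bop_op_diff[OF assms]], of "-1"] unfolding eq .
  also have "\<dots> \<le> opnorm G B + opnorm G (op_diff B B')"
    using opnorm_scale_le[OF bop_op_diff[OF assms], of "-1"] by simp
  finally show ?thesis .
qed

lemma Tplus_mult:
  assumes A: "A \<in> Tplus G" and B: "B \<in> Tplus G"
  shows "op_mult A B \<in> Tplus G"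
proof (rule TplusI)
  have bops: "is_bop G A" "is_bop G B"
    using A B by (simp_all add: Tplus_bop)
  then show "is_bop G (op_mult A B)"
    by (simp add: bop_op_mult)
  fix \<epsilon> :: real assume \<epsilon>: "\<epsilon> > 0"
  define a b where "a = opnorm G A" and "b = opnorm G B"
  have ab: "a \<ge> 0" "b \<ge> 0"
    unfolding a_def b_def using bops by (simp_all add: opnorm_nonneg)
  define \<delta> where "\<delta> = min 1 (\<epsilon> / (2 * (a + 1)))"
  have \<delta>: "\<delta> > 0" "\<delta> \<le> 1" "a * \<delta> \<le> \<epsilon> / 2"
    using \<epsilon> ab by (auto simp: \<delta>_def min_def field_simps)
  obtain B' where B': "B' \<in> alg_gen (generators G)" "opnorm G (op_diff B B') < \<delta>"
    using Tplus_approx[OF B \<delta>(1)] by blast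
  have "\<epsilon> / (2 * (b + 1)) > 0"
    using \<epsilon> ab by (simp add: add_nonneg_pos)
  then obtain A' where A': "A' \<in> alg_gen (generators G)" "opnorm G (op_diff A A') < \<epsilon> / (2 * (b + 1))"
    using Tplus_approx[OF A] by auto
  have bops': "is_bop G A'" "is_bop G B'" "is_bop G (op_diff A A')" "is_bop G (op_diff B B')"
    using A'(1) B'(1) bops by (simp_all add: alg_gen_bop bop_op_diff)
  have B'_norm: "opnorm G B' \<le> b + 1"
    using opnorm_le_add_diff[OF bops(2) bops'(2)] B'(2) \<delta>(2) b_def by linarith
  have "opnorm G (op_diff (op_mult A B) (op_mult A' B'))
      \<le> a * opnorm G (op_diff B B') + opnorm G (op_diff A A') * opnorm G B'"
    unfolding op_mult_diff_eq[OF bops(1) bops'(1) bops(2) bops'(2)] a_def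
    using opnorm_add_le[OF bop_op_mult[OF bops(1) bops'(4)] bop_op_mult[OF bops'(3) bops'(2)]]
      opnorm_mult_le[OF bops(1) bops'(4)] opnorm_mult_le[OF bops'(3) bops'(2)]
    by linarith
  also have "\<dots> < \<epsilon> / 2 + \<epsilon> / 2"
  proof (rule add_le_less_mono)
    show "a * opnorm G (op_diff B B') \<le> \<epsilon> / 2"
      using B'(2) \<delta>(3) ab(1) mult_left_mono[of "opnorm G (op_diff B B')" \<delta> a] by linarith
    have "opnorm G (op_diff A A') * opnorm G B' \<le> opnorm G (op_diff A A') * (b + 1)"
      using B'_norm opnorm_nonneg[OF bops'(3)] by (rule mult_left_mono)
    also have "\<dots> < \<epsilon> / 2"
      using A'(2) ab(2) by (simp add: pos_less_divide_eq add_nonneg_pos algebra_simps)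
    finally show "opnorm G (op_diff A A') * opnorm G B' < \<epsilon> / 2" .
  qed
  finally show "\<exists>C\<in>alg_gen (generators G). opnorm G (op_diff (op_mult A B) C) < \<epsilon>"
    using A'(1) B'(1) by (intro bexI[of _ "op_mult A' B'"] alg_gen.mult) auto
qed

lemma norm_le_all_pos_imp_zero:
  fixes z :: "'a::real_normed_vector"
  assumes "\<And>d. d > 0 \<Longrightarrow> norm z \<le> d * K"
  shows "z = 0"
proof (rule ccontr)
  assume "z \<noteq> 0"
  then have pos: "norm z > 0"
    by simp
  define d where "d = norm z / (2 * (\<bar>K\<bar> + 1))"
  have "d > 0"
    unfolding d_def using pos by (simp add: add_nonneg_pos)
  then have "norm z \<le> d * (\<bar>K\<bar> + 1)"
    using assms[of d] mult_left_mono[of K "\<bar>K\<bar> + 1" d] by linarith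
  also have "\<dots> = norm z / 2"
    unfolding d_def by (simp add: field_simps add_nonneg_pos)
  finally show False
    using pos by simp
qed

text \<open>Since \<open>|B f w| \<le> \<parallel>B\<parallel> \<parallel>f\<parallel>\<close>, such identities pass from the generated algebra to its closure.\<close>
lemma Tplus_apply_identity:
  assumes A: "A \<in> Tplus G" and ell2: "f \<in> ell2 G" "g \<in> ell2 G" "h \<in> ell2 G"
    and gen: "\<And>B. B \<in> alg_gen (generators G) \<Longrightarrow> B f w = B g u * a + B h v * b"
  shows "A f w = A g u * a + A h v * b"
proof -
  let ?K = "hnorm f + hnorm g * cmod a + hnorm h * cmod b"
  have "cmod (A f w - (A g u * a + A h v * b)) \<le> d * ?K" if "d > 0" for d
  proof -
    obtain B where B: "B \<in> alg_gen (generators G)" "opnorm G (op_diff A B) < d"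
      using Tplus_approx[OF A \<open>d > 0\<close>] by auto
    define n where "n = opnorm G (op_diff A B)"
    have bops: "is_bop G A" "is_bop G B"
      using A B(1) by (simp_all add: Tplus_bop alg_gen_bop)
    have n: "0 \<le> n" "n \<le> d"
      unfolding n_def using B(2) opnorm_nonneg[OF bop_op_diff[OF bops]] by simp_all
    have eq: "A f w - (A g u * a + A h v * b)
        = (A f w - B f w) - (A g u - B g u) * a - (A h v - B h v) * b"
      using gen[OF B(1)] by (simp add: algebra_simps)
    have "cmod (A f w - (A g u * a + A h v * b))
        \<le> cmod (A f w - B f w) + cmod ((A g u - B g u) * a) + cmod ((A h v - B h v) * b)"
      unfolding eq using norm_triangle_ineq4[of "A f w - B f w - (A g u - B g u) * a" "(A h v - B h v) * b"]
        norm_triangle_ineq4[of "A f w - B f w" "(A g u - B g u) * a"]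
      by linarith
    also have "\<dots> = cmod (A f w - B f w) + cmod (A g u - B g u) * cmod a + cmod (A h v - B h v) * cmod b"
      by (simp add: norm_mult)
    also have "\<dots> \<le> n * hnorm f + n * hnorm g * cmod a + n * hnorm h * cmod b"
      using norm_apply_diff_le[OF bops] ell2 unfolding n_def
      by (intro add_mono mult_right_mono) auto
    also have "\<dots> = n * ?K"
      by (simp add: algebra_simps)
    also have "\<dots> \<le> d * ?K"
      using n by (intro mult_right_mono) auto
    finally show ?thesis .
  qed
  then show ?thesis
    using norm_le_all_pos_imp_zero[of "A f w - (A g u * a + A h v * b)" ?K] by simp
qed

lemma P_mult_P: "v \<noteq> u \<Longrightarrow> op_mult (P G v) (P G u) = op_zero"
proof (intro ext)
  fix f w
  assume "v \<noteq> u"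
  show "op_mult (P G v) (P G u) f w = op_zero f w"
  proof (cases "f \<in> ell2 G")
    case True
    then have "P G u f \<in> ell2 G"
      by (simp add: P_ell2_hnorm_le(1))
    then show ?thesis
      using True \<open>v \<noteq> u\<close> by (simp add: op_mult_def op_zero_def P_apply)
  qed (simp add: op_mult_def op_zero_def P_outside_ell2 P_apply)
qed

lemma P_P_P: "u \<noteq> v \<Longrightarrow> op_mult (P G v) (op_mult (P G t) (P G u)) = op_zero"
proof (intro ext)
  fix f w
  assume "u \<noteq> v"
  show "op_mult (P G v) (op_mult (P G t) (P G u)) f w = op_zero f w"
  proof (cases "f \<in> ell2 G")
    case True
    then have "P G u f \<in> ell2 G" "P G t (P G u f) \<in> ell2 G"
      by (simp_all add: P_ell2_hnorm_le(1))
    then show ?thesis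
      using True \<open>u \<noteq> v\<close> by (simp add: op_mult_def op_zero_def P_apply)
  qed (simp add: op_mult_def op_zero_def P_outside_ell2 P_apply)
qed

lemma P_L_P:
  "op_mult (P G v) (op_mult (L G e) (P G u)) = (if src G e = u \<and> rng G e = v then L G e else op_zero)"
proof (intro ext)
  fix f w
  show "op_mult (P G v) (op_mult (L G e) (P G u)) f w = (if src G e = u \<and> rng G e = v then L G e else op_zero) f w"
  proof (cases "f \<in> ell2 G")
    case True
    then have ell2: "P G u f \<in> ell2 G" "L G e (P G u f) \<in> ell2 G"
      by (simp_all add: P_ell2_hnorm_le(1) L_ell2_hnorm_le(1))
    have PLPf: "op_mult (P G v) (op_mult (L G e) (P G u)) f w = (if fst w = v then L G e (P G u f) w else 0)"
      unfolding op_mult_def o_def P_apply[OF ell2(2)] by simp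
    have LPf: "L G e (P G u f) w = (if is_path G w \<and> snd w \<noteq> [] \<and> hd (snd w) = e
        then (if src G e = u then f (src G e, tl (snd w)) else 0) else 0)"
      unfolding L_apply[OF ell2(1)] by (simp add: P_apply[OF True])
    have "is_path G w \<Longrightarrow> snd w \<noteq> [] \<Longrightarrow> fst w = rng G (hd (snd w))"
      unfolding is_path_def by (cases w) auto
    then show ?thesis
      unfolding PLPf LPf by (auto simp: op_zero_def L_apply[OF True])
  qed (simp add: op_mult_def op_zero_def P_outside_ell2 L_outside_ell2 L_apply P_apply)
qed

lemma mat2_eq_iff:
  "(M::'a^2^2) = N \<longleftrightarrow> M$1$1 = N$1$1 \<and> M$1$2 = N$1$2 \<and> M$2$1 = N$2$1 \<and> M$2$2 = N$2$2"
  by (auto simp: vec_eq_iff forall_2)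

lemma matrix_mult_2_entries:
  fixes A B :: "'a::semiring_1^2^2"
  shows "(A ** B)$1$1 = A$1$1 * B$1$1 + A$1$2 * B$2$1"
    and "(A ** B)$1$2 = A$1$1 * B$1$2 + A$1$2 * B$2$2"
    and "(A ** B)$2$1 = A$2$1 * B$1$1 + A$2$2 * B$2$1"
    and "(A ** B)$2$2 = A$2$1 * B$1$2 + A$2$2 * B$2$2"
  by (simp_all add: matrix_matrix_mult_def sum_2)

lemma mat_2_entries:
  "(mat c :: 'a::zero^2^2)$1$1 = c" "(mat c :: 'a::zero^2^2)$2$2 = c"
  "(mat c :: 'a::zero^2^2)$1$2 = 0" "(mat c :: 'a::zero^2^2)$2$1 = 0"
  by (simp_all add: mat_def)

lemma mat_neg_one_mult: "mat (-1) ** (M::'a::ring_1^2^2) = - M"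
  by (simp add: mat2_eq_iff matrix_mult_2_entries mat_2_entries)

lemma norm_entry_le: "cmod (M $ i $ j) \<le> norm (M :: complex^2^2)"
  using Finite_Cartesian_Product.norm_nth_le[of "M $ i" j] Finite_Cartesian_Product.norm_nth_le[of M i]
  by linarith

lemma norm_vec2_le: "norm (v :: 'a::real_normed_vector^2) \<le> norm (v$1) + norm (v$2)"
proof -
  have "norm v = L2_set (\<lambda>i. norm (v$i)) UNIV"
    by (simp add: norm_vec_def)
  also have "\<dots> \<le> (\<Sum>i\<in>UNIV. norm (v$i))"
    by (rule L2_set_le_sum) simp
  finally show ?thesis
    by (simp add: sum_2)
qed

lemma norm_mat2_le: "norm (M :: complex^2^2) \<le> cmod (M$1$1) + cmod (M$1$2) + cmod (M$2$1) + cmod (M$2$2)"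
  using norm_vec2_le[of M] norm_vec2_le[of "M$1"] norm_vec2_le[of "M$2"] by simp

lemma nest_rep_diag_character:
  assumes \<pi>: "nest_rep G \<pi>" and nonzero: "A \<in> Tplus G" "\<pi> A $ i $ i \<noteq> 0"
  shows "character G (\<lambda>A. \<pi> A $ i $ i)"
  unfolding character_def
proof (intro conjI ballI allI)
  fix A B assume A: "A \<in> Tplus G" and B: "B \<in> Tplus G"
  then have upper_zero: "\<pi> A $ 1 $ 2 = 0" "\<pi> B $ 1 $ 2 = 0"
    using \<pi> unfolding nest_rep_def by blast+
  show "\<pi> (op_add A B) $ i $ i = \<pi> A $ i $ i + \<pi> B $ i $ i"
    using \<pi> A B unfolding nest_rep_def by simp
  show "\<pi> (op_mult A B) $ i $ i = \<pi> A $ i $ i * \<pi> B $ i $ i"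
    using \<pi> A B upper_zero exhaust_2[of i] unfolding nest_rep_def by (auto simp: matrix_mult_2_entries)
next
  fix A c assume "A \<in> Tplus G"
  then show "\<pi> (op_scale c A) $ i $ i = c * \<pi> A $ i $ i"
    using \<pi> exhaust_2[of i] unfolding nest_rep_def by (auto simp: matrix_mult_2_entries mat_2_entries)
qed (use nonzero in blast)

lemma rep_xy_hom:
  assumes "\<pi> \<in> rep_xy G x y"
  shows "A \<in> Tplus G \<Longrightarrow> B \<in> Tplus G \<Longrightarrow> \<pi> (op_add A B) = \<pi> A + \<pi> B"
    and "A \<in> Tplus G \<Longrightarrow> B \<in> Tplus G \<Longrightarrow> \<pi> (op_mult A B) = \<pi> A ** \<pi> B"
    and "A \<in> Tplus G \<Longrightarrow> \<pi> (op_scale c A) = mat c ** \<pi> A"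
  using assms unfolding rep_xy_def nest_rep_def by auto

lemma rep_xy_upper_zero: "\<pi> \<in> rep_xy G x y \<Longrightarrow> A \<in> Tplus G \<Longrightarrow> \<pi> A $ 1 $ 2 = 0"
  unfolding rep_xy_def nest_rep_def by blast

lemma rep_xy_bounded:
  assumes "\<pi> \<in> rep_xy G x y"
  shows "\<exists>M>0. \<forall>A\<in>Tplus G. norm (\<pi> A) \<le> M * opnorm G A"
proof -
  obtain C where C: "\<forall>A\<in>Tplus G. norm (\<pi> A) \<le> C * opnorm G A"
    using assms unfolding rep_xy_def nest_rep_def by blast
  have "norm (\<pi> A) \<le> max C 1 * opnorm G A" if "A \<in> Tplus G" for A
    using C that mult_right_mono[of C "max C 1" "opnorm G A"] opnorm_nonneg[OF Tplus_bop[OF that]]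
    by fastforce
  then show ?thesis
    by (intro exI[of _ "max C 1"]) auto
qed

lemma rep_xy_P_diag: "\<pi> \<in> rep_xy G x y \<Longrightarrow> \<pi> (P G x) $ 1 $ 1 = 1 \<and> \<pi> (P G y) $ 2 $ 2 = 1"
  unfolding rep_xy_def Mchar_def by auto

section \<open>The representations attached to the edges from \<open>x\<close> to \<open>y\<close>\<close>

definition triangular_with ::
    "('v, 'e) digraph \<Rightarrow> 'v \<Rightarrow> 'v \<Rightarrow> 'e \<Rightarrow> complex \<Rightarrow> complex \<Rightarrow> complex \<Rightarrow> ('v, 'e) oper \<Rightarrow> bool" where
  "triangular_with G x y e a b c A \<longleftrightarrow> (\<forall>f\<in>ell2 G.
     A f (x, []) = a * f (x, []) \<and> A f (y, []) = c * f (y, []) \<and>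
     A f (y, [e]) = b * f (x, []) + c * f (y, [e]))"

lemma triangular_with_op_add:
  "triangular_with G x y e a b c A \<Longrightarrow> triangular_with G x y e a' b' c' B \<Longrightarrow>
    triangular_with G x y e (a + a') (b + b') (c + c') (op_add A B)"
  unfolding triangular_with_def op_add_def by (simp add: algebra_simps)

lemma triangular_with_op_scale:
  "triangular_with G x y e a b c A \<Longrightarrow> triangular_with G x y e (d * a) (d * b) (d * c) (op_scale d A)"
  unfolding triangular_with_def op_scale_def by (simp add: algebra_simps)

lemma triangular_with_op_mult:
  assumes "triangular_with G x y e a b c A" "triangular_with G x y e a' b' c' B" "is_bop G B"
  shows "triangular_with G x y e (a * a') (b * a' + c * b') (c * c') (op_mult A B)"
  using assms bop_maps_ell2[OF assms(3)] unfolding triangular_with_def op_mult_def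
  by (simp add: algebra_simps)

text \<open>The compression of \<open>A\<close> to the span of \<open>h\<^sub>1 = \<xi>\<^sub>x\<close> and \<open>h\<^sub>2 = \<xi>\<^sub>e\<close>, the path \<open>e\<close> being
  encoded as \<open>(y, [e])\<close>. The entry \<open>\<langle>A \<xi>\<^sub>e, \<xi>\<^sub>e\<rangle>\<close> is read off at \<open>\<xi>\<^sub>y\<close> instead, which gives the same
  value on \<open>\<T>\<^sub>+(G)\<close> (lemma \<open>Tplus_triangular\<close>) and makes the diagonal independent of \<open>e\<close>.\<close>
definition edge_rep :: "('v, 'e) digraph \<Rightarrow> 'v \<Rightarrow> 'v \<Rightarrow> 'e \<Rightarrow> ('v, 'e) oper \<Rightarrow> complex^2^2" where
  "edge_rep G x y e A = (\<chi> i j.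
      if i = 1 \<and> j = 1 then A (xi (x, [])) (x, [])
      else if i = 2 \<and> j = 1 then A (xi (x, [])) (y, [e])
      else if i = 2 \<and> j = 2 then A (xi (y, [])) (y, [])
      else 0)"

lemma edge_rep_entries [simp]:
  "edge_rep G x y e A $ 1 $ 1 = A (xi (x, [])) (x, [])"
  "edge_rep G x y e A $ 2 $ 1 = A (xi (x, [])) (y, [e])"
  "edge_rep G x y e A $ 2 $ 2 = A (xi (y, [])) (y, [])"
  "edge_rep G x y e A $ 1 $ 2 = 0"
  unfolding edge_rep_def by simp_all

locale vertex_pair =
  fixes G :: "('v, 'e) digraph" and x y :: 'v
  assumes x_vert: "x \<in> verts G" and y_vert: "y \<in> verts G" and x_neq_y: "x \<noteq> y"

locale edge_between = vertex_pair +
  fixes e :: 'e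
  assumes edge_x_y: "e \<in> edges_from_to G x y"
begin

lemma edge_in_edges: "e \<in> edges G" and src_edge: "src G e = x" and rng_edge: "rng G e = y"
  using edge_x_y unfolding edges_from_to_def by auto

lemma xi_x_ell2: "xi (x, []) \<in> ell2 G" and xi_y_ell2: "xi (y, []) \<in> ell2 G"
  and is_path_edge: "is_path G (y, [e])"
  using x_vert y_vert edge_in_edges rng_edge by (auto intro!: xi_in_ell2 simp: is_path_def)

lemma triangular_with_coeffs:
  assumes "triangular_with G x y e a b c A" and "f \<in> ell2 G"
  shows "A f (x, []) = A (xi (x, [])) (x, []) * f (x, [])"
    and "A f (y, []) = A (xi (y, [])) (y, []) * f (y, [])"
    and "A f (y, [e]) = A (xi (x, [])) (y, [e]) * f (x, []) + A (xi (y, [])) (y, []) * f (y, [e])"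
proof -
  have "A (xi (x, [])) (x, []) = a" "A (xi (x, [])) (y, [e]) = b" "A (xi (y, [])) (y, []) = c"
    using assms(1) xi_x_ell2 xi_y_ell2 x_neq_y unfolding triangular_with_def by (auto simp: xi_def)
  then show "A f (x, []) = A (xi (x, [])) (x, []) * f (x, [])"
    and "A f (y, []) = A (xi (y, [])) (y, []) * f (y, [])"
    and "A f (y, [e]) = A (xi (x, [])) (y, [e]) * f (x, []) + A (xi (y, [])) (y, []) * f (y, [e])"
    using assms unfolding triangular_with_def by auto
qed

lemma alg_gen_triangular: "A \<in> alg_gen (generators G) \<Longrightarrow> \<exists>a b c. triangular_with G x y e a b c A"
proof (induction rule: alg_gen.induct)
  case (gen A)
  then consider e' where "A = L G e'" | v where "A = P G v"
    by blast
  then show ?case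
  proof cases
    case 1
    then have "triangular_with G x y e 0 (if e' = e then 1 else 0) 0 A"
      unfolding triangular_with_def by (auto simp: L_apply is_path_edge src_edge)
    then show ?thesis
      by blast
  next
    case 2
    then have "triangular_with G x y e (if x = v then 1 else 0) 0 (if y = v then 1 else 0) A"
      unfolding triangular_with_def by (auto simp: P_apply)
    then show ?thesis
      by blast
  qed
next
  case (add A B)
  then show ?case
    by (blast intro: triangular_with_op_add)
next
  case (scale A d)
  then show ?case
    by (blast intro: triangular_with_op_scale)
next
  case (mult A B)
  then show ?case
    using alg_gen_bop[OF mult.hyps(2)] by (blast intro: triangular_with_op_mult)
qed

lemma Tplus_triangular:
  assumes A: "A \<in> Tplus G" and f: "f \<in> ell2 G"
  shows "A f (x, []) = A (xi (x, [])) (x, []) * f (x, [])"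
    and "A f (y, []) = A (xi (y, [])) (y, []) * f (y, [])"
    and "A f (y, [e]) = A (xi (x, [])) (y, [e]) * f (x, []) + A (xi (y, [])) (y, []) * f (y, [e])"
proof -
  have gen: "B f (x, []) = B (xi (x, [])) (x, []) * f (x, [])"
    "B f (y, []) = B (xi (y, [])) (y, []) * f (y, [])"
    "B f (y, [e]) = B (xi (x, [])) (y, [e]) * f (x, []) + B (xi (y, [])) (y, []) * f (y, [e])"
    if "B \<in> alg_gen (generators G)" for B
    using alg_gen_triangular[OF that] triangular_with_coeffs[OF _ f] by blast+
  show "A f (x, []) = A (xi (x, [])) (x, []) * f (x, [])"
    using Tplus_apply_identity[OF A f xi_x_ell2 xi_x_ell2, of "(x, [])" "(x, [])" "f (x, [])" "(x, [])" 0]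
      gen(1) by simp
  show "A f (y, []) = A (xi (y, [])) (y, []) * f (y, [])"
    using Tplus_apply_identity[OF A f xi_y_ell2 xi_y_ell2, of "(y, [])" "(y, [])" "f (y, [])" "(y, [])" 0]
      gen(2) by simp
  show "A f (y, [e]) = A (xi (x, [])) (y, [e]) * f (x, []) + A (xi (y, [])) (y, []) * f (y, [e])"
    using Tplus_apply_identity[OF A f xi_x_ell2 xi_y_ell2, of "(y, [e])" "(y, [e])" "f (x, [])" "(y, [])" "f (y, [e])"]
      gen(3) by simp
qed
lemma edge_rep_add: "edge_rep G x y e (op_add A B) = edge_rep G x y e A + edge_rep G x y e B"
  by (simp add: mat2_eq_iff op_add_def)

lemma edge_rep_scale: "edge_rep G x y e (op_scale c A) = mat c ** edge_rep G x y e A"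
  by (simp add: mat2_eq_iff op_scale_def matrix_mult_2_entries mat_2_entries)

lemma edge_rep_mult:
  assumes A: "A \<in> Tplus G" and B: "B \<in> Tplus G"
  shows "edge_rep G x y e (op_mult A B) = edge_rep G x y e A ** edge_rep G x y e B"
proof -
  have "B (xi (x, [])) \<in> ell2 G" "B (xi (y, [])) \<in> ell2 G"
    using Tplus_bop[OF B] xi_x_ell2 xi_y_ell2 by (simp_all add: bop_maps_ell2)
  then show ?thesis
    by (simp add: mat2_eq_iff matrix_mult_2_entries op_mult_def Tplus_triangular[OF A])
qed

lemma norm_edge_rep_le:
  assumes "A \<in> Tplus G"
  shows "norm (edge_rep G x y e A) \<le> 4 * opnorm G A"
proof -
  have "is_path G (x, [])" "is_path G (y, [])"
    using x_vert y_vert by (simp_all add: is_path_def)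
  then have "cmod (A (xi (x, [])) w) \<le> opnorm G A" "cmod (A (xi (y, [])) w) \<le> opnorm G A" for w
    using Tplus_bop[OF assms] by (simp_all add: norm_apply_xi_le)
  then show ?thesis
    using norm_mat2_le[of "edge_rep G x y e A"] opnorm_nonneg[OF Tplus_bop[OF assms]]
    by (smt (verit) edge_rep_entries norm_zero)
qed

lemma edge_rep_image: "edge_rep G x y e ` Tplus G = {M. M $ 1 $ 2 = 0}"
proof
  show "{M. M $ 1 $ 2 = 0} \<subseteq> edge_rep G x y e ` Tplus G"
  proof
    fix M :: "complex^2^2"
    assume "M \<in> {M. M $ 1 $ 2 = 0}"
    define A where "A = op_add (op_scale (M$1$1) (P G x)) (op_add (op_scale (M$2$1) (L G e)) (op_scale (M$2$2) (P G y)))"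
    have "A \<in> Tplus G"
      unfolding A_def using x_vert y_vert edge_in_edges by (intro Tplus_add Tplus_scale P_in_Tplus L_in_Tplus)
    moreover have "edge_rep G x y e A = M"
      using \<open>M \<in> {M. M $ 1 $ 2 = 0}\<close> x_neq_y is_path_edge src_edge xi_x_ell2 xi_y_ell2
      by (simp add: mat2_eq_iff A_def op_add_def op_scale_def P_apply L_apply xi_def)
    ultimately show "M \<in> edge_rep G x y e ` Tplus G"
      by blast
  qed
qed auto

lemma edge_rep_in_rep_xy: "edge_rep G x y e \<in> rep_xy G x y"
proof -
  have nest: "nest_rep G (edge_rep G x y e)"
    unfolding nest_rep_def
    using edge_rep_add edge_rep_mult edge_rep_scale norm_edge_rep_le edge_rep_image by blast
  have P_diag: "edge_rep G x y e (P G x) $ 1 $ 1 = 1" "edge_rep G x y e (P G y) $ 2 $ 2 = 1"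
    using xi_x_ell2 xi_y_ell2 by (simp_all add: P_apply xi_def)
  have "character G (\<lambda>A. edge_rep G x y e A $ 1 $ 1)" "character G (\<lambda>A. edge_rep G x y e A $ 2 $ 2)"
    by (rule nest_rep_diag_character[OF nest P_in_Tplus[OF x_vert]]
        nest_rep_diag_character[OF nest P_in_Tplus[OF y_vert]]; use P_diag in simp)+
  then have "(\<lambda>A. edge_rep G x y e A $ 1 $ 1) \<in> Mchar G x" "(\<lambda>A. edge_rep G x y e A $ 2 $ 2) \<in> Mchar G y"
    unfolding Mchar_def using P_diag by simp_all
  with nest show ?thesis
    unfolding rep_xy_def by blast
qed

lemma edge_rep_L: "e' \<in> edges G \<Longrightarrow> edge_rep G x y e (L G e') $ 2 $ 1 = (if e' = e then 1 else 0)"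
  using is_path_edge src_edge xi_x_ell2 by (simp add: L_apply xi_def)

end

definition induced :: "(('v, 'e) oper \<Rightarrow> complex^2^2) \<Rightarrow> ('v, 'e) oper set \<Rightarrow> complex^2^2" where
  "induced \<pi> C = \<pi> (crep C)"

context vertex_pair
begin

abbreviation "Q \<equiv> QA G x y"
abbreviation "K \<equiv> Kxy G x y"
abbreviation "R \<equiv> rep_xy G x y"

lemma op_zero_in_Tplus: "op_zero \<in> Tplus G"
proof -
  have "op_scale 0 (P G x) \<in> Tplus G"
    using x_vert by (intro Tplus_scale P_in_Tplus)
  then show ?thesis
    by (simp add: op_scale_def op_zero_def)
qed

lemma rep_zero: "\<pi> \<in> R \<Longrightarrow> \<pi> op_zero = 0"
  using rep_xy_hom(1)[of \<pi> G x y op_zero op_zero] op_zero_in_Tplus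
  by (simp add: op_add_def op_zero_def)

lemma rep_diff: "\<pi> \<in> R \<Longrightarrow> A \<in> Tplus G \<Longrightarrow> B \<in> Tplus G \<Longrightarrow> \<pi> (op_diff A B) = \<pi> A - \<pi> B"
  unfolding op_diff_def by (simp add: rep_xy_hom Tplus_scale mat_neg_one_mult)

text \<open>The images of \<open>P\<^sub>x\<close> and \<open>P\<^sub>y\<close> are complementary idempotents, since \<open>P\<^sub>x P\<^sub>y = P\<^sub>y P\<^sub>x = 0\<close>.\<close>
lemma rep_P_entries:
  assumes \<pi>: "\<pi> \<in> R"
  shows "\<pi> (P G x) $ 1 $ 1 = 1" "\<pi> (P G x) $ 1 $ 2 = 0" "\<pi> (P G x) $ 2 $ 2 = 0"
    and "\<pi> (P G y) $ 1 $ 1 = 0" "\<pi> (P G y) $ 1 $ 2 = 0" "\<pi> (P G y) $ 2 $ 2 = 1"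
    and "\<pi> (P G y) $ 2 $ 1 = - \<pi> (P G x) $ 2 $ 1"
proof -
  have P: "P G x \<in> Tplus G" "P G y \<in> Tplus G"
    using x_vert y_vert by (simp_all add: P_in_Tplus)
  have products: "\<pi> (P G x) ** \<pi> (P G y) = 0" "\<pi> (P G y) ** \<pi> (P G x) = 0"
    using rep_xy_hom(2)[OF \<pi> P(1,2)] rep_xy_hom(2)[OF \<pi> P(2,1)] P_mult_P[of x y G] P_mult_P[of y x G]
      x_neq_y rep_zero[OF \<pi>]
    by simp_all
  show "\<pi> (P G x) $ 1 $ 1 = 1" "\<pi> (P G y) $ 2 $ 2 = 1"
    using rep_xy_P_diag[OF \<pi>] by simp_all
  show upper: "\<pi> (P G x) $ 1 $ 2 = 0" "\<pi> (P G y) $ 1 $ 2 = 0"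
    using rep_xy_upper_zero[OF \<pi>] P by simp_all
  show "\<pi> (P G y) $ 1 $ 1 = 0" "\<pi> (P G x) $ 2 $ 2 = 0" "\<pi> (P G y) $ 2 $ 1 = - \<pi> (P G x) $ 2 $ 1"
    using products upper rep_xy_P_diag[OF \<pi>]
    by (simp_all add: mat2_eq_iff matrix_mult_2_entries add_eq_0_iff)
qed

lemma Kxy_subset_Tplus: "K \<subseteq> Tplus G"
  unfolding Kxy_def by blast

lemma rep_Kxy: "k \<in> K \<Longrightarrow> \<pi> \<in> R \<Longrightarrow> \<pi> k = 0"
  unfolding Kxy_def by blast

lemma coset_subset_Tplus: "A \<in> Tplus G \<Longrightarrow> coset K A \<subseteq> Tplus G"
  unfolding coset_def using Tplus_add Kxy_subset_Tplus by blast

lemma rep_coset: "A \<in> Tplus G \<Longrightarrow> X \<in> coset K A \<Longrightarrow> \<pi> \<in> R \<Longrightarrow> \<pi> X = \<pi> A"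
  unfolding coset_def using rep_xy_hom(1) Kxy_subset_Tplus rep_Kxy by fastforce

lemma self_in_coset: "A \<in> coset K A"
proof -
  have "op_zero \<in> K" "op_add A op_zero = A"
    unfolding Kxy_def using op_zero_in_Tplus rep_zero by (simp_all add: op_add_def op_zero_def)
  then show ?thesis
    unfolding coset_def by force
qed

lemma crep_in_coset: "crep (coset K A) \<in> coset K A"
  unfolding crep_def by (rule someI[where P = "\<lambda>a. a \<in> coset K A", OF self_in_coset])

lemma coset_eq_iff:
  assumes A: "A \<in> Tplus G" and B: "B \<in> Tplus G"
  shows "coset K A = coset K B \<longleftrightarrow> (\<forall>\<pi>\<in>R. \<pi> A = \<pi> B)"
proof
  assume "coset K A = coset K B"
  then show "\<forall>\<pi>\<in>R. \<pi> A = \<pi> B"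
    using rep_coset[OF B] self_in_coset[of A] by simp
next
  assume same: "\<forall>\<pi>\<in>R. \<pi> A = \<pi> B"
  have sub: "coset K A \<subseteq> coset K B" if "A \<in> Tplus G" "B \<in> Tplus G" "\<forall>\<pi>\<in>R. \<pi> A = \<pi> B" for A B
  proof
    fix X assume "X \<in> coset K A"
    then obtain k where k: "k \<in> K" "X = op_add A k"
      unfolding coset_def by blast
    define k' where "k' = op_add (op_diff A B) k"
    have "op_diff A B \<in> Tplus G"
      unfolding op_diff_def using that by (intro Tplus_add Tplus_scale)
    then have "k' \<in> Tplus G" "\<forall>\<pi>\<in>R. \<pi> k' = 0"
      unfolding k'_def using k(1) Kxy_subset_Tplus that
      by (auto simp: Tplus_add rep_xy_hom rep_diff rep_Kxy)
    then have "k' \<in> K"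
      unfolding Kxy_def by simp
    moreover have "op_add B k' = X"
      unfolding k(2) k'_def by (simp add: op_add_def op_diff_def op_scale_def fun_eq_iff)
    ultimately show "X \<in> coset K B"
      unfolding coset_def by blast
  qed
  have "\<forall>\<pi>\<in>R. \<pi> B = \<pi> A"
    using same by auto
  then have "coset K B \<subseteq> coset K A"
    by (rule sub[OF B A])
  then show "coset K A = coset K B"
    using sub[OF A B same] by (intro subset_antisym)
qed

lemma quot_simps:
  "carr Q = coset K ` Tplus G"
  "plus Q C D = coset K (op_add (crep C) (crep D))"
  "times Q C D = coset K (op_mult (crep C) (crep D))"
  "scal Q c C = coset K (op_scale c (crep C))"
  "zer Q = coset K op_zero"
  "nrm Q C = Inf (opnorm G ` C)"
  unfolding QA_def quot_alg_def by simp_all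

lemma coset_in_carr: "A \<in> Tplus G \<Longrightarrow> coset K A \<in> carr Q"
  unfolding quot_simps by blast

lemma carr_crep:
  assumes "C \<in> carr Q"
  shows "crep C \<in> Tplus G" and "coset K (crep C) = C"
proof -
  obtain A where A: "A \<in> Tplus G" "C = coset K A"
    using assms unfolding quot_simps by blast
  then show crep: "crep C \<in> Tplus G"
    using coset_subset_Tplus crep_in_coset by blast
  have "\<forall>\<pi>\<in>R. \<pi> (crep C) = \<pi> A"
    using A rep_coset crep_in_coset by blast
  then show "coset K (crep C) = C"
    using A crep coset_eq_iff by simp
qed

lemma quot_closed:
  "C \<in> carr Q \<Longrightarrow> D \<in> carr Q \<Longrightarrow> plus Q C D \<in> carr Q"
  "C \<in> carr Q \<Longrightarrow> D \<in> carr Q \<Longrightarrow> times Q C D \<in> carr Q"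
  "C \<in> carr Q \<Longrightarrow> scal Q c C \<in> carr Q"
  "zer Q \<in> carr Q"
  using carr_crep(1) op_zero_in_Tplus
  unfolding quot_simps(2-5) by (auto intro!: coset_in_carr Tplus_add Tplus_mult Tplus_scale)

lemma induced_coset: "A \<in> Tplus G \<Longrightarrow> \<pi> \<in> R \<Longrightarrow> induced \<pi> (coset K A) = \<pi> A"
  unfolding induced_def using rep_coset crep_in_coset by blast

lemma induced_hom:
  assumes \<pi>: "\<pi> \<in> R"
  shows "C \<in> carr Q \<Longrightarrow> D \<in> carr Q \<Longrightarrow> induced \<pi> (plus Q C D) = induced \<pi> C + induced \<pi> D"
    and "C \<in> carr Q \<Longrightarrow> D \<in> carr Q \<Longrightarrow> induced \<pi> (times Q C D) = induced \<pi> C ** induced \<pi> D"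
    and "C \<in> carr Q \<Longrightarrow> induced \<pi> (scal Q c C) = mat c ** induced \<pi> C"
    and "induced \<pi> (zer Q) = 0"
  using carr_crep(1) \<pi> op_zero_in_Tplus
  unfolding quot_simps
  by (simp_all add: induced_coset Tplus_add Tplus_mult Tplus_scale rep_xy_hom rep_zero)
    (simp_all add: induced_def)

lemma quot_eqI:
  assumes "C \<in> carr Q" "D \<in> carr Q" and "\<And>\<pi>. \<pi> \<in> R \<Longrightarrow> induced \<pi> C = induced \<pi> D"
  shows "C = D"
  using assms carr_crep coset_eq_iff unfolding induced_def by metis

lemma induced_upper_zero: "C \<in> carr Q \<Longrightarrow> \<pi> \<in> R \<Longrightarrow> induced \<pi> C $ 1 $ 2 = 0"
  unfolding induced_def using carr_crep(1)[of C] rep_xy_upper_zero[of \<pi> G x y "crep C"] by simp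

lemma nrm_coset_le:
  assumes "A \<in> Tplus G"
  shows "nrm Q (coset K A) \<le> opnorm G A"
  unfolding quot_simps
proof (rule cInf_lower)
  show "bdd_below (opnorm G ` coset K A)"
    using coset_subset_Tplus[OF assms] by (auto intro!: bdd_belowI[of _ 0] opnorm_nonneg Tplus_bop)
qed (use self_in_coset in blast)

lemma norm_induced_le:
  assumes C: "C \<in> carr Q" and M: "M > 0" and bound: "\<forall>A\<in>Tplus G. norm (\<pi> A) \<le> M * opnorm G A"
    and \<pi>: "\<pi> \<in> R"
  shows "norm (induced \<pi> C) \<le> M * nrm Q C"
proof -
  have "norm (induced \<pi> C) / M \<le> Inf (opnorm G ` C)"
  proof (rule cInf_greatest)
    show "opnorm G ` C \<noteq> {}"
      using carr_crep(2)[OF C] self_in_coset by blast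
    fix r assume "r \<in> opnorm G ` C"
    then obtain X where X: "X \<in> C" "r = opnorm G X"
      by blast
    have "X \<in> Tplus G"
      using coset_subset_Tplus[OF carr_crep(1)[OF C]] carr_crep(2)[OF C] X(1) by blast
    moreover have "induced \<pi> C = \<pi> X"
      using rep_coset[OF carr_crep(1)[OF C] _ \<pi>, of X] carr_crep(2)[OF C] X(1)
      unfolding induced_def by simp
    ultimately show "norm (induced \<pi> C) / M \<le> r"
      using bound X(2) M by (simp add: divide_le_eq mult.commute)
  qed
  then show ?thesis
    using M unfolding quot_simps by (simp add: divide_le_eq mult.commute)
qed

lemma coset_diff:
  assumes A: "A \<in> Tplus G" and B: "B \<in> Tplus G"
  shows "coset K (op_diff A B) = plus Q (coset K A) (scal Q (-1) (coset K B))"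
proof -
  have diff: "op_diff A B \<in> Tplus G"
    unfolding op_diff_def using A B by (intro Tplus_add Tplus_scale)
  then show ?thesis
    by (rule quot_eqI[OF coset_in_carr])
      (simp_all add: coset_in_carr A B diff quot_closed induced_hom induced_coset rep_diff mat_neg_one_mult)
qed

end

lemma closed_in_common_zeros:
  assumes diff_carr: "\<And>a b. a \<in> carr A \<Longrightarrow> b \<in> carr A \<Longrightarrow> plus A a (scal A (-1) b) \<in> carr A"
    and diff: "\<And>\<phi> a b. \<phi> \<in> \<Phi> \<Longrightarrow> a \<in> carr A \<Longrightarrow> b \<in> carr A \<Longrightarrow>
      \<phi> (plus A a (scal A (-1) b)) = \<phi> a - \<phi> b"
    and bounded: "\<And>\<phi>. \<phi> \<in> \<Phi> \<Longrightarrow> \<exists>M\<ge>0. \<forall>a\<in>carr A. cmod (\<phi> a) \<le> M * nrm A a"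
  shows "is_closed_in A {a \<in> carr A. \<forall>\<phi>\<in>\<Phi>. \<phi> a = (0::complex)}"
  unfolding is_closed_in_def
proof (intro ballI impI CollectI conjI)
  fix a \<phi>
  assume a: "a \<in> carr A" and \<phi>: "\<phi> \<in> \<Phi>"
    and approx: "\<forall>\<epsilon>>0. \<exists>b\<in>{a \<in> carr A. \<forall>\<phi>\<in>\<Phi>. \<phi> a = 0}. nrm A (plus A a (scal A (-1) b)) < \<epsilon>"
  obtain M where M: "M \<ge> 0" "\<forall>a\<in>carr A. cmod (\<phi> a) \<le> M * nrm A a"
    using bounded[OF \<phi>] by blast
  have "cmod (\<phi> a) \<le> d * M" if "d > 0" for d
  proof -
    obtain b where b: "b \<in> carr A" "\<phi> b = 0" "nrm A (plus A a (scal A (-1) b)) < d"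
      using approx \<phi> \<open>d > 0\<close> by blast
    then have "cmod (\<phi> a) = cmod (\<phi> (plus A a (scal A (-1) b)))"
      using diff[OF \<phi> a] by simp
    also have "\<dots> \<le> M * nrm A (plus A a (scal A (-1) b))"
      using M(2) diff_carr[OF a b(1)] by blast
    also have "\<dots> \<le> M * d"
      using M(1) b(3) by (simp add: mult_left_mono)
    finally show ?thesis
      by (simp add: mult.commute)
  qed
  then show "\<phi> a = 0"
    by (rule norm_le_all_pos_imp_zero)
qed blast

lemma is_closed_in_Int: "is_closed_in A J1 \<Longrightarrow> is_closed_in A J2 \<Longrightarrow> is_closed_in A (J1 \<inter> J2)"
  unfolding is_closed_in_def by blast

lemma closed_ideal_gen_subset:
  "is_ideal A J \<Longrightarrow> is_closed_in A J \<Longrightarrow> S \<subseteq> J \<Longrightarrow> closed_ideal_gen A S \<subseteq> J"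
  unfolding closed_ideal_gen_def by blast

lemma generating_setI:
  assumes "is_ideal A I" "is_closed_in A I" "S \<subseteq> I"
    and "\<And>J. is_ideal A J \<Longrightarrow> is_closed_in A J \<Longrightarrow> S \<subseteq> J \<Longrightarrow> I \<subseteq> J"
  shows "generating_set A I S"
  unfolding generating_set_def closed_ideal_gen_def using assms by blast

lemma n_generated_ecard:
  assumes gen: "generating_set A I (f ` E)" and inj: "inj_on f E"
    and lower: "\<And>S E'. finite S \<Longrightarrow> generating_set A I S \<Longrightarrow> E' \<subseteq> E \<Longrightarrow> finite E' \<Longrightarrow> card E' \<le> card S"
  shows "n_generated A I (ecard E)"
proof (cases "finite E")
  case True
  then have "finite (f ` E)" "card (f ` E) = card E"
    using card_image[OF inj] by simp_all
  then show ?thesis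
    unfolding n_generated_def ecard_def using True gen lower by auto
next
  case False
  have "\<not> generating_set A I S" if "finite S" for S
  proof
    assume "generating_set A I S"
    obtain E' where "E' \<subseteq> E" "finite E'" "card E' = Suc (card S)"
      using infinite_arbitrarily_large[OF False] by blast
    then show False
      using lower[OF \<open>finite S\<close> \<open>generating_set A I S\<close>, of E'] by simp
  qed
  then show ?thesis
    unfolding n_generated_def ecard_def using False by auto
qed

lemma homogeneous_system_nontrivial_solution:
  fixes v :: "'e \<Rightarrow> 's \<Rightarrow> 'a::field"
  assumes "finite S" "finite E" "card S < card E"
  shows "\<exists>c. (\<exists>e\<in>E. c e \<noteq> 0) \<and> (\<forall>s\<in>S. (\<Sum>e\<in>E. c e * v e s) = 0)"
  using assms
proof (induction S arbitrary: E v rule: finite_induct)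
  case empty
  then obtain e0 where "e0 \<in> E"
    by fastforce
  then show ?case
    by (intro exI[of _ "\<lambda>e. if e = e0 then 1 else 0"]) auto
next
  case (insert s S)
  show ?case
  proof (cases "\<forall>e\<in>E. v e s = 0")
    case True
    then show ?thesis
      using insert.IH[of E v] insert.prems insert.hyps by auto
  next
    case False
    then obtain e0 where e0: "e0 \<in> E" "v e0 s \<noteq> 0"
      by blast
    txt \<open>Eliminate the unknown \<open>c e0\<close> using the equation indexed by \<open>s\<close>.\<close>
    define E' where "E' = E - {e0}"
    define q where "q t = v e0 t / v e0 s" for t
    define w where "w e t = v e t - v e s * q t" for e t
    have "finite E'" "card S < card E'"
      unfolding E'_def using insert e0 by (simp_all add: card_Diff_singleton)
    then obtain c' where c': "\<exists>e\<in>E'. c' e \<noteq> 0" "\<forall>t\<in>S. (\<Sum>e\<in>E'. c' e * w e t) = 0"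
      using insert.IH by blast
    have w_s: "w e s = 0" for e
      unfolding w_def q_def using e0 by simp
    define \<sigma> where "\<sigma> = (\<Sum>e\<in>E'. c' e * v e s)"
    define c where "c e = (if e = e0 then - \<sigma> / v e0 s else c' e)" for e
    have "(\<Sum>e\<in>E. c e * v e t) = 0" if t: "t \<in> insert s S" for t
    proof -
      have "(\<Sum>e\<in>E'. c' e * w e t) = (\<Sum>e\<in>E'. c' e * v e t) - \<sigma> * q t"
        unfolding w_def \<sigma>_def by (simp add: right_diff_distrib sum_subtractf sum_distrib_right mult.assoc)
      moreover have "(\<Sum>e\<in>E'. c' e * w e t) = 0"
        using c'(2) w_s t by auto
      ultimately have "(\<Sum>e\<in>E'. c e * v e t) = \<sigma> * q t"
        unfolding c_def E'_def by simp
      moreover have "(\<Sum>e\<in>E. c e * v e t) = c e0 * v e0 t + (\<Sum>e\<in>E'. c e * v e t)"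
        unfolding E'_def using insert.prems(1) e0(1) by (simp add: sum.remove)
      ultimately show ?thesis
        unfolding c_def q_def by simp
    qed
    moreover have "\<exists>e\<in>E. c e \<noteq> 0"
      using c'(1) unfolding c_def E'_def by auto
    ultimately show ?thesis
      by blast
  qed
qed

section \<open>The radical of \<open>\<T>\<^sub>+(G)/\<K>\<^sub>x\<^sub>,\<^sub>y\<close>\<close>

context vertex_pair
begin

lemma quot_diff_closed: "a \<in> carr Q \<Longrightarrow> b \<in> carr Q \<Longrightarrow> plus Q a (scal Q (-1) b) \<in> carr Q"
  by (simp add: quot_closed)

lemma induced_diff:
  "\<pi> \<in> R \<Longrightarrow> a \<in> carr Q \<Longrightarrow> b \<in> carr Q \<Longrightarrow> induced \<pi> (plus Q a (scal Q (-1) b)) = induced \<pi> a - induced \<pi> b"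
  by (simp add: induced_hom quot_closed mat_neg_one_mult)

lemma induced_entry_bounded:
  assumes "\<pi> \<in> R"
  shows "\<exists>M\<ge>0. \<forall>C\<in>carr Q. cmod (induced \<pi> C $ i $ j) \<le> M * nrm Q C"
proof -
  obtain M where "M > 0" "\<forall>A\<in>Tplus G. norm (\<pi> A) \<le> M * opnorm G A"
    using rep_xy_bounded[OF assms] by blast
  then have "\<forall>C\<in>carr Q. cmod (induced \<pi> C $ i $ j) \<le> M * nrm Q C"
    using norm_induced_le[OF _ _ _ assms] norm_entry_le order_trans by blast
  with \<open>M > 0\<close> show ?thesis
    by (intro exI[of _ M]) simp
qed

lemma edge_rep_in_R: "e \<in> edges_from_to G x y \<Longrightarrow> edge_rep G x y e \<in> R"
  by (intro edge_between.edge_rep_in_rep_xy)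
    (simp add: edge_between_def edge_between_axioms_def vertex_pair_axioms)

definition diag_vanishing :: "(('v, 'e) oper \<Rightarrow> complex^2^2) set \<Rightarrow> ('v, 'e) oper set set" where
  "diag_vanishing Rs = {C \<in> carr Q. \<forall>\<pi>\<in>Rs. \<forall>i. induced \<pi> C $ i $ i = 0}"

lemma diag_vanishing_antimono: "Rs \<subseteq> Rs' \<Longrightarrow> diag_vanishing Rs' \<subseteq> diag_vanishing Rs"
  unfolding diag_vanishing_def by blast

lemma diag_vanishing_ideal:
  assumes Rs: "Rs \<subseteq> R"
  shows "is_ideal Q (diag_vanishing Rs)"
  unfolding is_ideal_def
proof (intro conjI ballI allI)
  show "diag_vanishing Rs \<subseteq> carr Q" "zer Q \<in> diag_vanishing Rs"
    unfolding diag_vanishing_def using Rs by (auto simp: quot_closed induced_hom)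
next
  fix a b assume "a \<in> diag_vanishing Rs" "b \<in> diag_vanishing Rs"
  then show "plus Q a b \<in> diag_vanishing Rs"
    unfolding diag_vanishing_def using Rs by (auto simp: quot_closed induced_hom)
next
  fix a c assume "a \<in> diag_vanishing Rs"
  then show "scal Q c a \<in> diag_vanishing Rs"
    unfolding diag_vanishing_def using Rs
    by (auto simp: quot_closed induced_hom forall_2 matrix_mult_2_entries mat_2_entries)
next
  fix a b assume a: "a \<in> diag_vanishing Rs" and b: "b \<in> carr Q"
  have ac: "a \<in> carr Q"
    using a unfolding diag_vanishing_def by blast
  have "induced \<pi> (times Q b a) $ i $ i = 0 \<and> induced \<pi> (times Q a b) $ i $ i = 0"
    if \<pi>: "\<pi> \<in> Rs" for \<pi> i
  proof -
    have "\<pi> \<in> R"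
      using Rs \<pi> by blast
    moreover have "induced \<pi> a $ 1 $ 1 = 0" "induced \<pi> a $ 2 $ 2 = 0"
      using a \<pi> unfolding diag_vanishing_def by blast+
    ultimately show ?thesis
      using induced_upper_zero[OF ac] induced_upper_zero[OF b] exhaust_2[of i]
      by (auto simp: ac b induced_hom matrix_mult_2_entries)
  qed
  then show "times Q b a \<in> diag_vanishing Rs" "times Q a b \<in> diag_vanishing Rs"
    unfolding diag_vanishing_def using ac b by (simp_all add: quot_closed)
qed

lemma diag_vanishing_closed:
  assumes Rs: "Rs \<subseteq> R"
  shows "is_closed_in Q (diag_vanishing Rs)"
proof -
  define \<Phi> where "\<Phi> = {(\<lambda>C. induced \<pi> C $ i $ i) | \<pi> i. \<pi> \<in> Rs}"
  have "is_closed_in Q {C \<in> carr Q. \<forall>\<phi>\<in>\<Phi>. \<phi> C = 0}"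
    by (rule closed_in_common_zeros)
      (use Rs in \<open>auto simp: \<Phi>_def quot_diff_closed induced_diff intro: induced_entry_bounded\<close>)
  moreover have "{C \<in> carr Q. \<forall>\<phi>\<in>\<Phi>. \<phi> C = 0} = diag_vanishing Rs"
    unfolding \<Phi>_def diag_vanishing_def by auto
  ultimately show ?thesis
    by simp
qed

lemma induced_quasi_product:
  assumes "\<pi> \<in> R" "c \<in> carr Q" "z \<in> carr Q"
  shows "induced \<pi> (plus Q c (plus Q z (scal Q (-1) (times Q c z))))
    = induced \<pi> c + induced \<pi> z - induced \<pi> c ** induced \<pi> z"
  using assms by (simp add: induced_hom quot_closed mat_neg_one_mult)

lemma diag_vanishing_lqr:
  assumes z: "z \<in> diag_vanishing R"
  shows "lqr Q z"
proof -
  have zc: "z \<in> carr Q"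
    using z unfolding diag_vanishing_def by blast
  have "plus Q (scal Q (-1) z) (plus Q z (scal Q (-1) (times Q (scal Q (-1) z) z))) = zer Q"
  proof (rule quot_eqI)
    fix \<pi> assume \<pi>: "\<pi> \<in> R"
    have "induced \<pi> z $ 1 $ 1 = 0" "induced \<pi> z $ 2 $ 2 = 0" "induced \<pi> z $ 1 $ 2 = 0"
      using z \<pi> induced_upper_zero[OF zc \<pi>] unfolding diag_vanishing_def by auto
    then show "induced \<pi> (plus Q (scal Q (-1) z) (plus Q z (scal Q (-1) (times Q (scal Q (-1) z) z))))
        = induced \<pi> (zer Q)"
      using \<pi> zc
      by (simp add: induced_quasi_product quot_closed induced_hom mat2_eq_iff matrix_mult_2_entries mat_2_entries)
  qed (simp_all add: zc quot_closed)
  then show ?thesis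
    unfolding lqr_def using zc by (blast intro: quot_closed)
qed

lemma lqr_diag_neq_one:
  assumes lqr: "lqr Q z" and z: "z \<in> carr Q" and \<pi>: "\<pi> \<in> R"
  shows "induced \<pi> z $ i $ i \<noteq> 1"
proof
  assume one: "induced \<pi> z $ i $ i = 1"
  obtain c where c: "c \<in> carr Q" "plus Q c (plus Q z (scal Q (-1) (times Q c z))) = zer Q"
    using lqr unfolding lqr_def by blast
  then have "induced \<pi> c + induced \<pi> z - induced \<pi> c ** induced \<pi> z = 0"
    using induced_quasi_product[OF \<pi> c(1) z] induced_hom(4)[OF \<pi>] by simp
  then have "(induced \<pi> c + induced \<pi> z - induced \<pi> c ** induced \<pi> z) $ i $ i = 0"
    by simp
  then show False
    using one induced_upper_zero[OF c(1) \<pi>] induced_upper_zero[OF z \<pi>] exhaust_2[of i]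
    by (auto simp: matrix_mult_2_entries)
qed

theorem jrad_eq_diag_vanishing: "jrad Q = diag_vanishing R"
proof
  show "diag_vanishing R \<subseteq> jrad Q"
  proof
    fix C assume C: "C \<in> diag_vanishing R"
    then have "plus Q (scal Q t C) (times Q b C) \<in> diag_vanishing R" if "b \<in> carr Q" for t b
      using diag_vanishing_ideal[of R] that unfolding is_ideal_def by blast
    moreover have "C \<in> carr Q"
      using C unfolding diag_vanishing_def by blast
    ultimately show "C \<in> jrad Q"
      unfolding jrad_def by (blast intro: diag_vanishing_lqr)
  qed
  show "jrad Q \<subseteq> diag_vanishing R"
  proof
    fix C assume C: "C \<in> jrad Q"
    then have Cc: "C \<in> carr Q" and lqr: "\<And>t. lqr Q (plus Q (scal Q t C) (times Q (zer Q) C))"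
      unfolding jrad_def using quot_closed(4) by auto
    have "induced \<pi> C $ i $ i = 0" if \<pi>: "\<pi> \<in> R" for \<pi> i
    proof (rule ccontr)
      assume nonzero: "induced \<pi> C $ i $ i \<noteq> 0"
      define z where "z = plus Q (scal Q (1 / induced \<pi> C $ i $ i) C) (times Q (zer Q) C)"
      have "z \<in> carr Q" "induced \<pi> z $ i $ i = 1"
        unfolding z_def using Cc \<pi> nonzero exhaust_2[of i]
        by (auto simp: quot_closed induced_hom matrix_mult_2_entries mat_2_entries)
      moreover have "lqr Q z"
        unfolding z_def by (rule lqr)
      ultimately show False
        using lqr_diag_neq_one[OF _ _ \<pi>] by blast
    qed
    then show "C \<in> diag_vanishing R"
      unfolding diag_vanishing_def using Cc by blast
  qed
qed

end

section \<open>Generators of the radical\<close>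

definition sandwich :: "('v, 'e) digraph \<Rightarrow> 'v \<Rightarrow> 'v \<Rightarrow> ('v, 'e) oper \<Rightarrow> ('v, 'e) oper" where
  "sandwich G v u A = op_mult (P G v) (op_mult A (P G u))"

lemma sandwich_in_Tplus:
  "A \<in> Tplus G \<Longrightarrow> u \<in> verts G \<Longrightarrow> v \<in> verts G \<Longrightarrow> sandwich G v u A \<in> Tplus G"
  unfolding sandwich_def by (intro Tplus_mult P_in_Tplus)

lemma sandwich_diff:
  assumes A: "is_bop G A" and B: "is_bop G B"
  shows "op_diff (sandwich G v u A) (sandwich G v u B) = sandwich G v u (op_diff A B)"
proof (intro ext)
  fix f w
  show "op_diff (sandwich G v u A) (sandwich G v u B) f w = sandwich G v u (op_diff A B) f w"
  proof (cases "f \<in> ell2 G")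
    case True
    then have "P G u f \<in> ell2 G"
      by (rule P_ell2_hnorm_le(1))
    then have AP: "A (P G u f) \<in> ell2 G" and BP: "B (P G u f) \<in> ell2 G"
      using A B by (simp_all add: bop_maps_ell2)
    have "P G v (\<lambda>w. -1 * B (P G u f) w + A (P G u f) w)
        = (\<lambda>w. -1 * P G v (B (P G u f)) w + P G v (A (P G u f)) w)"
      by (rule bop_linear[OF bop_P BP AP])
    then show ?thesis
      unfolding sandwich_def op_diff_def op_add_def op_scale_def op_mult_def by (simp add: add.commute)
  next
    case False
    then have "P G u f = (\<lambda>_. 0)"
      by (rule P_outside_ell2)
    then show ?thesis
      using bop_zero[OF A] bop_zero[OF B] bop_zero[OF bop_P, of G v]
      unfolding sandwich_def op_diff_def op_add_def op_scale_def op_mult_def by simp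
  qed
qed

lemma opnorm_P_le: "opnorm G (P G v) \<le> 1"
proof (rule opnorm_leI)
  fix f assume "f \<in> ell2 G" "hnorm f \<le> 1"
  then show "hnorm (P G v f) \<le> 1"
    using P_ell2_hnorm_le(2)[of f G v] by linarith
qed

lemma opnorm_sandwich_le:
  assumes A: "is_bop G A"
  shows "opnorm G (sandwich G v u A) \<le> opnorm G A"
proof -
  have AP: "is_bop G (op_mult A (P G u))"
    using A bop_P by (rule bop_op_mult)
  have "opnorm G (sandwich G v u A) \<le> opnorm G (P G v) * opnorm G (op_mult A (P G u))"
    unfolding sandwich_def using bop_P AP by (rule opnorm_mult_le)
  also have "\<dots> \<le> opnorm G (op_mult A (P G u))"
    using opnorm_P_le opnorm_nonneg[OF AP] mult_right_mono[of _ 1] by fastforce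
  also have "\<dots> \<le> opnorm G A * opnorm G (P G u)"
    using A bop_P by (rule opnorm_mult_le)
  also have "\<dots> \<le> opnorm G A"
    using opnorm_P_le opnorm_nonneg[OF A] mult_left_mono[of _ 1] by fastforce
  finally show ?thesis .
qed

context vertex_pair
begin

abbreviation edge_cosets :: "('v, 'e) oper set set" where
  "edge_cosets \<equiv> (\<lambda>e. coset K (L G e)) ` edges_from_to G x y"

lemma rep_sandwich:
  "\<pi> \<in> R \<Longrightarrow> A \<in> Tplus G \<Longrightarrow> u \<in> verts G \<Longrightarrow> v \<in> verts G \<Longrightarrow>
    \<pi> (sandwich G v u A) = \<pi> (P G v) ** (\<pi> A ** \<pi> (P G u))"
  unfolding sandwich_def by (simp add: rep_xy_hom Tplus_mult P_in_Tplus)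

text \<open>\<open>A \<mapsto> P\<^sub>y A P\<^sub>x\<close> is additive, and multiplicative up to the insertion of \<open>P\<^sub>x + P\<^sub>y\<close>,
  which is the identity modulo \<open>\<K>\<^sub>x\<^sub>,\<^sub>y\<close>.\<close>
lemma coset_sandwich_ops:
  assumes A: "A \<in> Tplus G" and B: "B \<in> Tplus G"
  shows "coset K (sandwich G y x (op_add A B)) = plus Q (coset K (sandwich G y x A)) (coset K (sandwich G y x B))"
    and "coset K (sandwich G y x (op_scale c A)) = scal Q c (coset K (sandwich G y x A))"
    and "coset K (sandwich G y x (op_mult A B)) =
      plus Q (times Q (coset K (sandwich G y x A)) (coset K (sandwich G x x B)))
             (times Q (coset K (sandwich G y y A)) (coset K (sandwich G y x B)))"
proof -
  note T = A B Tplus_add[OF A B] Tplus_scale[OF A] Tplus_mult[OF A B]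
  note sw = sandwich_in_Tplus[OF _ x_vert x_vert] sandwich_in_Tplus[OF _ x_vert y_vert]
    sandwich_in_Tplus[OF _ y_vert y_vert]
  note carr = coset_in_carr[OF sw(1)] coset_in_carr[OF sw(2)] coset_in_carr[OF sw(3)]
  show "coset K (sandwich G y x (op_add A B)) = plus Q (coset K (sandwich G y x A)) (coset K (sandwich G y x B))"
    by (rule quot_eqI)
      (simp_all add: T carr quot_closed induced_hom induced_coset sw rep_sandwich x_vert y_vert
        rep_xy_hom mat2_eq_iff matrix_mult_2_entries algebra_simps)
  show "coset K (sandwich G y x (op_scale c A)) = scal Q c (coset K (sandwich G y x A))"
    by (rule quot_eqI)
      (simp_all add: T carr quot_closed induced_hom induced_coset sw rep_sandwich x_vert y_vert
        rep_xy_hom mat2_eq_iff matrix_mult_2_entries mat_2_entries algebra_simps)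
  show "coset K (sandwich G y x (op_mult A B)) =
      plus Q (times Q (coset K (sandwich G y x A)) (coset K (sandwich G x x B)))
             (times Q (coset K (sandwich G y y A)) (coset K (sandwich G y x B)))"
  proof (rule quot_eqI)
    fix \<pi> assume \<pi>: "\<pi> \<in> R"
    have "\<pi> A $ 1 $ 2 = 0" "\<pi> B $ 1 $ 2 = 0"
      using rep_xy_upper_zero[OF \<pi>] A B by simp_all
    then show "induced \<pi> (coset K (sandwich G y x (op_mult A B))) = induced \<pi> (plus Q
        (times Q (coset K (sandwich G y x A)) (coset K (sandwich G x x B)))
        (times Q (coset K (sandwich G y y A)) (coset K (sandwich G y x B))))"
      using rep_P_entries[OF \<pi>] \<pi>
      by (simp add: T carr quot_closed induced_hom induced_coset sw rep_sandwich x_vert y_vert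
        rep_xy_hom mat2_eq_iff matrix_mult_2_entries algebra_simps)
  qed (simp_all add: T carr quot_closed coset_in_carr sw)
qed

lemma sandwich_alg_gen_in_ideal:
  assumes J: "is_ideal Q J" and edges: "edge_cosets \<subseteq> J" and B: "B \<in> alg_gen (generators G)"
  shows "coset K (sandwich G y x B) \<in> J"
  using B
proof (induction rule: alg_gen.induct)
  have zero: "coset K op_zero \<in> J"
    using J unfolding is_ideal_def quot_simps by blast
  case (gen A)
  then consider e where "e \<in> edges G" "A = L G e" | v where "A = P G v"
    by blast
  then show ?case
  proof cases
    case 1
    then show ?thesis
      using edges zero by (auto simp: sandwich_def P_L_P edges_from_to_def)
  next
    case 2
    then show ?thesis
      using zero x_neq_y unfolding sandwich_def by (simp add: P_P_P)
  qed
next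
  case (add A B)
  then have "A \<in> Tplus G" "B \<in> Tplus G"
    using alg_gen_subset_Tplus by auto
  then show ?case
    using J add.IH by (simp add: coset_sandwich_ops is_ideal_def)
next
  case (scale A c)
  then have "A \<in> Tplus G"
    using alg_gen_subset_Tplus by auto
  then show ?case
    using J scale.IH by (simp add: coset_sandwich_ops(2)[of A A] is_ideal_def)
next
  case (mult A B)
  then have "A \<in> Tplus G" "B \<in> Tplus G"
    using alg_gen_subset_Tplus by auto
  then have "coset K (sandwich G x x B) \<in> carr Q" "coset K (sandwich G y y A) \<in> carr Q"
    using x_vert y_vert by (simp_all add: coset_in_carr sandwich_in_Tplus)
  then have "times Q (coset K (sandwich G y x A)) (coset K (sandwich G x x B)) \<in> J"
    "times Q (coset K (sandwich G y y A)) (coset K (sandwich G y x B)) \<in> J"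
    using J mult.IH unfolding is_ideal_def by blast+
  then show ?case
    using J \<open>A \<in> Tplus G\<close> \<open>B \<in> Tplus G\<close> unfolding is_ideal_def by (simp add: coset_sandwich_ops)
qed

lemma coset_sandwich_eq:
  assumes A: "A \<in> Tplus G" and diag: "coset K A \<in> diag_vanishing R"
  shows "coset K (sandwich G y x A) = coset K A"
proof -
  have "\<pi> (sandwich G y x A) = \<pi> A" if \<pi>: "\<pi> \<in> R" for \<pi>
  proof -
    have "\<pi> A $ 1 $ 1 = 0" "\<pi> A $ 2 $ 2 = 0"
      using diag \<pi> induced_coset[OF A \<pi>] unfolding diag_vanishing_def by auto
    then show ?thesis
      using rep_P_entries[OF \<pi>] rep_xy_upper_zero[OF \<pi> A] rep_sandwich[OF \<pi> A x_vert y_vert]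
      by (simp add: mat2_eq_iff matrix_mult_2_entries)
  qed
  then show ?thesis
    using A x_vert y_vert by (simp add: coset_eq_iff sandwich_in_Tplus)
qed

lemma diag_vanishing_subset_closed_ideal:
  assumes J: "is_ideal Q J" "is_closed_in Q J" and edges: "edge_cosets \<subseteq> J"
  shows "diag_vanishing R \<subseteq> J"
proof
  fix C assume C: "C \<in> diag_vanishing R"
  then have Cc: "C \<in> carr Q"
    unfolding diag_vanishing_def by blast
  define A where "A = crep C"
  have A: "A \<in> Tplus G" "coset K A = C"
    unfolding A_def using carr_crep[OF Cc] by auto
  have "\<exists>D\<in>J. nrm Q (plus Q C (scal Q (-1) D)) < \<epsilon>" if "\<epsilon> > 0" for \<epsilon>
  proof -
    obtain B where B: "B \<in> alg_gen (generators G)" "opnorm G (op_diff A B) < \<epsilon>"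
      using Tplus_approx[OF A(1) \<open>\<epsilon> > 0\<close>] by blast
    have bops: "is_bop G A" "is_bop G B"
      using Tplus_bop[OF A(1)] alg_gen_bop[OF B(1)] by simp_all
    have sw: "sandwich G y x A \<in> Tplus G" "sandwich G y x B \<in> Tplus G"
      using A(1) B(1) alg_gen_subset_Tplus x_vert y_vert by (auto intro: sandwich_in_Tplus)
    have "op_diff A B \<in> Tplus G"
      using A(1) B(1) alg_gen_subset_Tplus unfolding op_diff_def by (auto intro: Tplus_add Tplus_scale)
    have eq: "plus Q C (scal Q (-1) (coset K (sandwich G y x B))) = coset K (sandwich G y x (op_diff A B))"
      using coset_diff[OF sw] coset_sandwich_eq[OF A(1)] C A(2) sandwich_diff[OF bops] by simp
    have "nrm Q (coset K (sandwich G y x (op_diff A B))) \<le> opnorm G (sandwich G y x (op_diff A B))"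
      using \<open>op_diff A B \<in> Tplus G\<close> x_vert y_vert by (intro nrm_coset_le sandwich_in_Tplus)
    also have "\<dots> \<le> opnorm G (op_diff A B)"
      using bops by (intro opnorm_sandwich_le bop_op_diff)
    finally have "nrm Q (plus Q C (scal Q (-1) (coset K (sandwich G y x B)))) \<le> opnorm G (op_diff A B)"
      unfolding eq .
    then have "nrm Q (plus Q C (scal Q (-1) (coset K (sandwich G y x B)))) < \<epsilon>"
      using B(2) by linarith
    then show ?thesis
      using sandwich_alg_gen_in_ideal[OF J(1) edges B(1)] by blast
  qed
  then show "C \<in> J"
    using J(2) Cc unfolding is_closed_in_def by blast
qed

lemma edge_coset_in_diag_vanishing:
  assumes e: "e \<in> edges_from_to G x y"
  shows "coset K (L G e) \<in> diag_vanishing R"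
proof -
  have e': "e \<in> edges G" "src G e = x" "rng G e = y"
    using e unfolding edges_from_to_def by auto
  then have L: "L G e \<in> Tplus G" "sandwich G y x (L G e) = L G e"
    unfolding sandwich_def by (simp_all add: L_in_Tplus P_L_P)
  have "\<pi> (L G e) $ i $ i = 0" if \<pi>: "\<pi> \<in> R" for \<pi> i
  proof -
    have "\<pi> (L G e) = \<pi> (P G y) ** (\<pi> (L G e) ** \<pi> (P G x))"
      using rep_sandwich[OF \<pi> L(1) x_vert y_vert] L(2) by simp
    then have "\<pi> (L G e) $ i $ i = (\<pi> (P G y) ** (\<pi> (L G e) ** \<pi> (P G x))) $ i $ i"
      by (rule arg_cong)
    also have "\<dots> = 0"
      using rep_P_entries[OF \<pi>] rep_xy_upper_zero[OF \<pi> L(1)] exhaust_2[of i]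
      by (auto simp: matrix_mult_2_entries)
    finally show ?thesis .
  qed
  then show ?thesis
    unfolding diag_vanishing_def using L(1) by (simp add: coset_in_carr induced_coset)
qed

theorem generating_set_edge_cosets: "generating_set Q (jrad Q) edge_cosets"
  unfolding jrad_eq_diag_vanishing
  by (rule generating_setI)
    (use edge_coset_in_diag_vanishing diag_vanishing_subset_closed_ideal in
      \<open>auto intro: diag_vanishing_ideal diag_vanishing_closed\<close>)

lemma inj_on_edge_cosets: "inj_on (\<lambda>e. coset K (L G e)) (edges_from_to G x y)"
proof (rule inj_onI)
  fix e1 e2
  assume e: "e1 \<in> edges_from_to G x y" "e2 \<in> edges_from_to G x y"
    and eq: "coset K (L G e1) = coset K (L G e2)"
  then have "e1 \<in> edges G" "e2 \<in> edges G"
    unfolding edges_from_to_def by auto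
  then have "edge_rep G x y e1 (L G e1) = edge_rep G x y e1 (L G e2)"
    using eq edge_rep_in_R[OF e(1)] by (simp add: coset_eq_iff L_in_Tplus)
  then show "e1 = e2"
    using edge_between.edge_rep_L[of G x y e1] e \<open>e1 \<in> edges G\<close> \<open>e2 \<in> edges G\<close> vertex_pair_axioms
    by (auto simp: edge_between_def edge_between_axioms_def mat2_eq_iff split: if_splits)
qed

end

section \<open>A lower bound for the number of generators\<close>

context vertex_pair
begin

lemma norm_induced_edge_rep_le:
  assumes e: "e \<in> edges_from_to G x y" and C: "C \<in> carr Q"
  shows "norm (induced (edge_rep G x y e) C) \<le> 4 * nrm Q C"
proof -
  have "\<forall>A\<in>Tplus G. norm (edge_rep G x y e A) \<le> 4 * opnorm G A"
    using edge_between.norm_edge_rep_le[of G x y e] e vertex_pair_axioms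
    by (simp add: edge_between_def edge_between_axioms_def)
  then show ?thesis
    using norm_induced_le[OF C _ _ edge_rep_in_R[OF e]] by simp
qed

text \<open>On elements with vanishing diagonal, left and right multiplication act on the \<open>(2,1)\<close>
  entries of all the edge representations through the same scalar, because their diagonal
  entries do not depend on the edge. Hence every linear relation among these entries cuts
  out a closed ideal.\<close>
definition edge_annihilator :: "'e set \<Rightarrow> ('e \<Rightarrow> complex) \<Rightarrow> ('v, 'e) oper set set" where
  "edge_annihilator E c = {C \<in> diag_vanishing (edge_rep G x y ` E).
     (\<Sum>e\<in>E. c e * induced (edge_rep G x y e) C $ 2 $ 1) = 0}"

lemma edge_annihilator_ideal:
  assumes E: "E \<subseteq> edges_from_to G x y"
  shows "is_ideal Q (edge_annihilator E c)"
proof -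
  let ?D = "diag_vanishing (edge_rep G x y ` E)"
  define \<Lambda> where "\<Lambda> C = (\<Sum>e\<in>E. c e * induced (edge_rep G x y e) C $ 2 $ 1)" for C
  have R: "edge_rep G x y e \<in> R" if "e \<in> E" for e
    using E that by (blast intro: edge_rep_in_R)
  have D: "is_ideal Q ?D"
    using R by (intro diag_vanishing_ideal) blast
  have diag: "induced (edge_rep G x y e) a $ 1 $ 1 = 0" "induced (edge_rep G x y e) a $ 2 $ 2 = 0"
    if "a \<in> ?D" "e \<in> E" for a e
    using that unfolding diag_vanishing_def by blast+
  have "\<Lambda> (zer Q) = 0"
    unfolding \<Lambda>_def by (intro sum.neutral) (simp add: induced_hom R)
  moreover have "\<Lambda> (plus Q a b) = \<Lambda> a + \<Lambda> b" if "a \<in> carr Q" "b \<in> carr Q" for a b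
    unfolding \<Lambda>_def sum.distrib[symmetric]
    by (intro sum.cong refl) (simp add: that induced_hom R distrib_left)
  moreover have "\<Lambda> (scal Q t a) = t * \<Lambda> a" if "a \<in> carr Q" for a t
    unfolding \<Lambda>_def sum_distrib_left
    by (intro sum.cong refl) (simp add: that induced_hom R matrix_mult_2_entries mat_2_entries)
  moreover have "\<Lambda> (times Q b a) = crep b (xi (y, [])) (y, []) * \<Lambda> a"
    and "\<Lambda> (times Q a b) = crep b (xi (x, [])) (x, []) * \<Lambda> a"
    if a: "a \<in> ?D" and b: "b \<in> carr Q" for a b
  proof -
    have ac: "a \<in> carr Q"
      using a D unfolding is_ideal_def by blast
    show "\<Lambda> (times Q b a) = crep b (xi (y, [])) (y, []) * \<Lambda> a"
      unfolding \<Lambda>_def sum_distrib_left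
      by (intro sum.cong refl)
        (simp add: induced_hom R ac b diag[OF a] matrix_mult_2_entries, simp add: induced_def)
    show "\<Lambda> (times Q a b) = crep b (xi (x, [])) (x, []) * \<Lambda> a"
      unfolding \<Lambda>_def sum_distrib_left
      by (intro sum.cong refl)
        (simp add: induced_hom R ac b diag[OF a] matrix_mult_2_entries, simp add: induced_def)
  qed
  ultimately show ?thesis
    using D unfolding is_ideal_def edge_annihilator_def \<Lambda>_def[symmetric] by (auto simp: subset_iff)
qed

lemma edge_functional_diff:
  assumes E: "E \<subseteq> edges_from_to G x y" and ab: "a \<in> carr Q" "b \<in> carr Q"
  shows "(\<Sum>e\<in>E. c e * induced (edge_rep G x y e) (plus Q a (scal Q (-1) b)) $ 2 $ 1)
    = (\<Sum>e\<in>E. c e * induced (edge_rep G x y e) a $ 2 $ 1) - (\<Sum>e\<in>E. c e * induced (edge_rep G x y e) b $ 2 $ 1)"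
  unfolding sum_subtractf[symmetric]
proof (intro sum.cong refl)
  fix e assume "e \<in> E"
  then have "edge_rep G x y e \<in> R"
    using E by (blast intro: edge_rep_in_R)
  then show "c e * induced (edge_rep G x y e) (plus Q a (scal Q (-1) b)) $ 2 $ 1
      = c e * induced (edge_rep G x y e) a $ 2 $ 1 - c e * induced (edge_rep G x y e) b $ 2 $ 1"
    by (simp add: induced_diff ab right_diff_distrib)
qed

lemma norm_edge_functional_le:
  assumes E: "E \<subseteq> edges_from_to G x y" and C: "C \<in> carr Q"
  shows "cmod (\<Sum>e\<in>E. c e * induced (edge_rep G x y e) C $ 2 $ 1) \<le> 4 * (\<Sum>e\<in>E. cmod (c e)) * nrm Q C"
proof -
  have "cmod (\<Sum>e\<in>E. c e * induced (edge_rep G x y e) C $ 2 $ 1)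
      \<le> (\<Sum>e\<in>E. cmod (c e) * cmod (induced (edge_rep G x y e) C $ 2 $ 1))"
    by (rule order_trans[OF norm_sum]) (simp add: norm_mult)
  also have "\<dots> \<le> (\<Sum>e\<in>E. cmod (c e) * (4 * nrm Q C))"
  proof (intro sum_mono mult_left_mono)
    fix e assume "e \<in> E"
    then have "e \<in> edges_from_to G x y"
      using E by blast
    then show "cmod (induced (edge_rep G x y e) C $ 2 $ 1) \<le> 4 * nrm Q C"
      using norm_induced_edge_rep_le[OF _ C] norm_entry_le[of "induced (edge_rep G x y e) C" 2 1]
      by fastforce
  qed simp
  also have "\<dots> = (\<Sum>e\<in>E. cmod (c e)) * (4 * nrm Q C)"
    by (rule sum_distrib_right[symmetric])
  finally show ?thesis
    by (simp add: mult_ac)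
qed

lemma edge_annihilator_closed:
  assumes E: "E \<subseteq> edges_from_to G x y"
  shows "is_closed_in Q (edge_annihilator E c)"
proof -
  define \<Lambda> where "\<Lambda> C = (\<Sum>e\<in>E. c e * induced (edge_rep G x y e) C $ 2 $ 1)" for C
  have "is_closed_in Q {C \<in> carr Q. \<forall>\<phi>\<in>{\<Lambda>}. \<phi> C = 0}"
    by (rule closed_in_common_zeros)
      (use E in \<open>auto simp: \<Lambda>_def quot_diff_closed edge_functional_diff sum_nonneg
        intro!: exI[of _ "4 * (\<Sum>e\<in>E. cmod (c e))"] norm_edge_functional_le\<close>)
  moreover have "edge_annihilator E c = diag_vanishing (edge_rep G x y ` E) \<inter> {C \<in> carr Q. \<forall>\<phi>\<in>{\<Lambda>}. \<phi> C = 0}"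
    unfolding edge_annihilator_def \<Lambda>_def diag_vanishing_def by auto
  moreover have "edge_rep G x y ` E \<subseteq> R"
    using E edge_rep_in_R by blast
  ultimately show ?thesis
    by (auto intro: is_closed_in_Int diag_vanishing_closed)
qed

theorem card_le_card_generating_set:
  assumes S: "finite S" "generating_set Q (jrad Q) S"
    and E: "E \<subseteq> edges_from_to G x y" "finite E"
  shows "card E \<le> card S"
proof (rule ccontr)
  assume "\<not> card E \<le> card S"
  then have "card S < card E"
    by simp
  then obtain c where c: "\<exists>e\<in>E. c e \<noteq> 0" "\<forall>s\<in>S. (\<Sum>e\<in>E. c e * induced (edge_rep G x y e) s $ 2 $ 1) = 0"
    using homogeneous_system_nontrivial_solution[OF S(1) E(2) \<open>card S < card E\<close>,
        where v = "\<lambda>e s. induced (edge_rep G x y e) s $ 2 $ 1"]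
    by blast
  have "edge_rep G x y ` E \<subseteq> R"
    using E(1) edge_rep_in_R by blast
  moreover have "S \<subseteq> diag_vanishing R"
    using S(2) unfolding generating_set_def jrad_eq_diag_vanishing by blast
  ultimately have "S \<subseteq> diag_vanishing (edge_rep G x y ` E)"
    by (meson diag_vanishing_antimono subset_trans)
  then have "S \<subseteq> edge_annihilator E c"
    using c(2) unfolding edge_annihilator_def by blast
  then have J: "jrad Q \<subseteq> edge_annihilator E c"
    using S(2) closed_ideal_gen_subset[OF edge_annihilator_ideal[OF E(1)] edge_annihilator_closed[OF E(1)]]
    unfolding generating_set_def by blast
  obtain e0 where e0: "e0 \<in> E" "c e0 \<noteq> 0"
    using c(1) by blast
  then have e0': "e0 \<in> edges_from_to G x y" "e0 \<in> edges G"
    using E(1) unfolding edges_from_to_def by auto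
  have "coset K (L G e0) \<in> edge_annihilator E c"
    using J edge_coset_in_diag_vanishing[OF e0'(1)] jrad_eq_diag_vanishing by blast
  moreover have "(\<Sum>e\<in>E. c e * induced (edge_rep G x y e) (coset K (L G e0)) $ 2 $ 1)
      = (\<Sum>e\<in>E. if e = e0 then c e else 0)"
  proof (intro sum.cong refl)
    fix e assume "e \<in> E"
    then have "e \<in> edges_from_to G x y"
      using E(1) by blast
    then show "c e * induced (edge_rep G x y e) (coset K (L G e0)) $ 2 $ 1 = (if e = e0 then c e else 0)"
      using induced_coset[OF L_in_Tplus[OF e0'(2)] edge_rep_in_R] edge_between.edge_rep_L[of G x y e]
        e0'(2) vertex_pair_axioms
      by (auto simp: edge_between_def edge_between_axioms_def)
  qed
  ultimately show False
    using e0 E(2) unfolding edge_annihilator_def by simp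
qed

end

theorem theorem2p10:
  fixes G :: "('v, 'e) digraph" and x y :: 'v and n :: enat
  assumes "digraph_wf G"
    and "countable (verts G)" and "countable (edges G)"
    and "x \<in> verts G" and "y \<in> verts G" and "x \<noteq> y"
    and "ecard (edges_from_to G x y) = n" and "1 \<le> n"
  shows "n_generated (QA G x y) (jrad (QA G x y)) n \<and>
         generating_set (QA G x y) (jrad (QA G x y))
           ((\<lambda>e. coset (Kxy G x y) (L G e)) ` edges_from_to G x y)"
proof -
  interpret vertex_pair G x y
    using assms(4-6) by unfold_locales
  have "n_generated Q (jrad Q) (ecard (edges_from_to G x y))"
    using generating_set_edge_cosets inj_on_edge_cosets card_le_card_generating_set
    by (rule n_generated_ecard)
  then show ?thesis
    using assms(7) generating_set_edge_cosets by simp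
qed

end
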